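(* Let $s\in W_p$ be a reflection in a wall of $\overline{C}$, $\lambda\in C\cap X(T)$, $\mu\in\overline{C}\cap X(T)$ with $\mathrm{Stab}_{W_p}(\mu)=\{1,s\}$, and let $w\in W^{I,\lambda}$. If $w\cdot\lambda\in X(T)_+$ then $\lambda\preceq w\cdot\lambda$. Furthermore, if $w\cdot\lambda\in X(T)_+$ then there exist $s_1,\dots,s_n\in S_p$ such that $w=s_1s_2\cdots s_n$, such that $s_1s_2\cdots s_i\cdot\lambda\prec s_1s_2\cdots s_is_{i+1}\cdot\lambda$ for all $0\le i\le n-1$ (for $i=0$ this reads $\lambda\prec s_1\cdot\lambda$), and such that $s_1s_2\cdots s_{i-1}s_is_{i-1}\cdots s_2s_1\notin W_{I,p}$ for all $1\le i\le n$.
   Context: $G$ connected reductive over algebraically closed field of characteristic $p>0$ satisfying Jantzen's standard assumptions, $p\ge h$ (Coxeter number). $T$ a maximal torus with character group $X(T)$, roots $\Phi\supseteq\Phi^+\supseteq\Phi_s$, $\rho$ the half-sum of positive roots. $W_p$ is the affine Weyl group generated by $s_{\alpha,mp}=t_{mp\alpha}s_\alpha$ ($\alpha\in\Phi$, $m\in\mathbb{Z}$), acting on $X(T)\otimes\mathbb{R}$ by $w\cdot\nu=w(\nu+\rho)-\rho$. $C=\{x:0<\langle x+\rho,\alpha^\vee\rangle<p\ \forall\alpha\in\Phi^+\}$, $\overline{C}$ its closure; $S_p\subseteq W_p$ is the set of reflections in the walls of $C$ (the simple reflections). Fix $I\subseteq\Phi_s$; $W_{I,p}$ is generated by $s_\alpha$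 and translations by $mp\alpha$, $\alpha\in I$; $\overline{C}_I=\{x:0\le\langle x+\rho,\alpha^\vee\rangle\le p\ \forall\alpha\in\Phi^+\cap\mathbb{Z}I\}$ and $W^{I,\lambda}=\{w\in W_p:w\cdot\lambda\in\overline{C}_I\}$. $X(T)_+=\{\nu\in X(T):\langle\nu+\rho,\alpha^\vee\rangle\ge0\ \forall\alpha\in\Phi^+\}$. $\preceq$ is the partial order on $X(T)$ given by the transitive closure of $s_{\alpha,mp}\cdot\nu\preceq\nu$ whenever $\alpha\in\Phi^+$, $m\in\mathbb{Z}$, $\langle\nu+\rho,\alpha^\vee\rangle\ge mp$. *)

theory Defs
  imports "HOL-Analysis.Analysis"
begin

text \<open>Combinatorial setting: X(T) tensor R is modelled by a Euclidean space 'a whose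
inner product is a W-invariant form; the coroot pairing is then
<x, alpha^vee> = 2 (x . alpha) / (alpha . alpha).\<close>

definition cop :: "'a::euclidean_space \<Rightarrow> 'a \<Rightarrow> real" where
  "cop x a = 2 * (x \<bullet> a) / (a \<bullet> a)"

definition refl :: "'a::euclidean_space \<Rightarrow> 'a \<Rightarrow> 'a" where
  "refl a x = x - cop x a *\<^sub>R a"

text \<open>s_{alpha, m p} = t_{m p alpha} s_alpha (ordinary action)\<close>
definition aff_refl :: "nat \<Rightarrow> 'a::euclidean_space \<Rightarrow> int \<Rightarrow> 'a \<Rightarrow> 'a" where
  "aff_refl p a m = (\<lambda>x. refl a x + (of_int m * real p) *\<^sub>R a)"

definition transl :: "'a::euclidean_space \<Rightarrow> 'a \<Rightarrow> 'a" where
  "transl v = (\<lambda>x. x + v)"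

definition rho :: "'a::euclidean_space set \<Rightarrow> 'a" where
  "rho Pos = (1/2) *\<^sub>R (\<Sum>a\<in>Pos. a)"

definition dot :: "'a::euclidean_space set \<Rightarrow> ('a \<Rightarrow> 'a) \<Rightarrow> 'a \<Rightarrow> 'a" where
  "dot Pos w x = w (x + rho Pos) - rho Pos"

definition zspan :: "'a::euclidean_space set \<Rightarrow> 'a set" where
  "zspan B = {\<Sum>b\<in>B. of_int (c b) *\<^sub>R b | c. True}"

text \<open>Subgroup (of the group of maps) generated by a set of involutions / invertible maps
closed under inverses: closure under composition, containing the identity.\<close>
inductive_set gen_group :: "('a \<Rightarrow> 'a) set \<Rightarrow> ('a \<Rightarrow> 'a) set" for S where
  gen_id: "id \<in> gen_group S"
| gen_step: "s \<in> S \<Longrightarrow> w \<in> gen_group S \<Longrightarrow> s \<circ> w \<in> gen_group S"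

definition Wp :: "'a::euclidean_space set \<Rightarrow> nat \<Rightarrow> ('a \<Rightarrow> 'a) set" where
  "Wp Phi p = gen_group {aff_refl p a m | a m. a \<in> Phi}"

text \<open>W_{I,p}: generated by s_alpha and translations by m p alpha, alpha in I
(translations by -m p alpha are included, so this is the generated group).\<close>
definition WIp :: "'a::euclidean_space set \<Rightarrow> nat \<Rightarrow> ('a \<Rightarrow> 'a) set" where
  "WIp I p = gen_group ({refl a | a. a \<in> I} \<union>
                        {transl ((of_int m * real p) *\<^sub>R a) | a m. a \<in> I})"

definition alcove :: "'a::euclidean_space set \<Rightarrow> nat \<Rightarrow> 'a set" where
  "alcove Pos p = {x. \<forall>a\<in>Pos. 0 < cop (x + rho Pos) a \<and> cop (x + rho Pos) a < real p}"

definition alcove_cl :: "'a::euclidean_space set \<Rightarrow> nat \<Rightarrow> 'a set" where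
  "alcove_cl Pos p = {x. \<forall>a\<in>Pos. 0 \<le> cop (x + rho Pos) a \<and> cop (x + rho Pos) a \<le> real p}"

text \<open>S_p: reflections in the walls of C. The hyperplane
{x. <x+rho, alpha^vee> = m p} is a wall of C iff it contains a point of the closure of C
lying on no other reflecting hyperplane.\<close>
definition Sp :: "'a::euclidean_space set \<Rightarrow> nat \<Rightarrow> ('a \<Rightarrow> 'a) set" where
  "Sp Pos p = {aff_refl p a m | a m. a \<in> Pos \<and>
      (\<exists>x \<in> alcove_cl Pos p. cop (x + rho Pos) a = of_int m * real p \<and>
          (\<forall>b\<in>Pos. b \<noteq> a \<longrightarrow> 0 < cop (x + rho Pos) b \<and> cop (x + rho Pos) b < real p))}"

definition CI :: "'a::euclidean_space set \<Rightarrow> 'a set \<Rightarrow> nat \<Rightarrow> 'a set" where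
  "CI Pos I p = {x. \<forall>a\<in>Pos \<inter> zspan I.
      0 \<le> cop (x + rho Pos) a \<and> cop (x + rho Pos) a \<le> real p}"

definition WIlam :: "'a::euclidean_space set \<Rightarrow> 'a set \<Rightarrow> 'a set \<Rightarrow> nat \<Rightarrow> 'a \<Rightarrow> ('a \<Rightarrow> 'a) set" where
  "WIlam Phi Pos I p lam = {w \<in> Wp Phi p. dot Pos w lam \<in> CI Pos I p}"

definition dominant :: "'a::euclidean_space set \<Rightarrow> 'a set \<Rightarrow> 'a set" where
  "dominant X Pos = {nu \<in> X. \<forall>a\<in>Pos. cop (nu + rho Pos) a \<ge> 0}"

definition linkage_step :: "'a::euclidean_space set \<Rightarrow> 'a set \<Rightarrow> nat \<Rightarrow> 'a \<Rightarrow> 'a \<Rightarrow> bool" where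
  "linkage_step X Pos p nu' nu \<longleftrightarrow> nu \<in> X \<and>
     (\<exists>a m. a \<in> Pos \<and> cop (nu + rho Pos) a \<ge> of_int m * real p \<and>
            nu' = dot Pos (aff_refl p a m) nu)"

definition preceq :: "'a::euclidean_space set \<Rightarrow> 'a set \<Rightarrow> nat \<Rightarrow> 'a \<Rightarrow> 'a \<Rightarrow> bool" where
  "preceq X Pos p = (linkage_step X Pos p)\<^sup>*\<^sup>*"

definition prec :: "'a::euclidean_space set \<Rightarrow> 'a set \<Rightarrow> nat \<Rightarrow> 'a \<Rightarrow> 'a \<Rightarrow> bool" where
  "prec X Pos p x y \<longleftrightarrow> preceq X Pos p x y \<and> x \<noteq> y"

definition prodl :: "('a \<Rightarrow> 'a) list \<Rightarrow> 'a \<Rightarrow> 'a" where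
  "prodl ss = foldr (\<circ>) ss id"

text \<open>Reduced crystallographic root system Phi in the real span of the character
lattice X, positive system Pos with base Simp, X a full lattice with integral coroot
pairings, and derived group simply connected (fundamental weights lie in X).\<close>
definition std_root_datum :: "'a::euclidean_space set \<Rightarrow> 'a set \<Rightarrow> 'a set \<Rightarrow> 'a set \<Rightarrow> bool" where
  "std_root_datum X Phi Pos Simp \<longleftrightarrow>
     (\<exists>B. independent B \<and> span B = UNIV \<and> X = zspan B) \<and>
     finite Phi \<and> 0 \<notin> Phi \<and> Phi \<subseteq> X \<and>
     (\<forall>x\<in>X. \<forall>a\<in>Phi. cop x a \<in> \<int>) \<and>
     (\<forall>a\<in>Phi. \<forall>b\<in>Phi. refl a b \<in> Phi) \<and>
     (\<forall>a\<in>Phi. \<forall>c::real. c *\<^sub>R a \<in> Phi \<longrightarrow> c = 1 \<or> c = -1) \<and>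
     Pos \<subseteq> Phi \<and> Phi = Pos \<union> uminus ` Pos \<and> Pos \<inter> uminus ` Pos = {} \<and>
     Simp \<subseteq> Pos \<and> independent Simp \<and>
     (\<forall>a\<in>Pos. \<exists>c::'a \<Rightarrow> nat. a = (\<Sum>b\<in>Simp. of_nat (c b) *\<^sub>R b)) \<and>
     (\<forall>a\<in>Simp. \<exists>x\<in>X. \<forall>b\<in>Simp. cop x b = (if b = a then 1 else 0))"

definition coxeter_number :: "'a::euclidean_space set \<Rightarrow> real" where
  "coxeter_number Pos = (if Pos = {} then 1 else Max ((\<lambda>a. cop (rho Pos) a + 1) ` Pos))"

end

(*
  Work in rho-shifted coordinates y = nu + rho, in which the dot action of W_p is its ordinary
  affine action and C becomes the open alcove A = {y. 0 < <y, b^vee> < p for all b > 0}.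
  Put y0 = lam + rho and let N(w) be the number of reflecting hyperplanes separating y0 from
  w y0.  If N(w) > 0, some wall H of A separates y0 from w^-1 y0; for the reflection s in H,
  the hyperplane w H = H_{c, k p} separates y0 from w y0 and is the only hyperplane between
  w y0 and w s y0 = s_{c, k p} (w y0), so N(w s) = N(w) - 1.  Dominance of w.lam gives k >= 1
  and <w y0, c^vee> > k p, which makes (w s).lam < w.lam a single linkage step, while the
  bound <w y0, b^vee> <= p for b in ZI shows c is not in ZI, so the conjugate s_{c, k p} of the
  last letter is not in W_{I,p}.  Induct on N(w); at N(w) = 0 we have w = 1, because W_p is
  generated by the wall reflections of A and a word in these that returns to A folds back to
  the identity (deletion argument on galleries).
*)

theory Submission
  imports Defs
begin

section \<open>Reflections and coroot pairings\<close>

lemma cop_add: "cop (x + y) a = cop x a + cop y a"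
  unfolding cop_def by (simp add: inner_add_left add_divide_distrib distrib_left)

lemma cop_diff: "cop (x - y) a = cop x a - cop y a"
  unfolding cop_def by (simp add: inner_diff_left diff_divide_distrib right_diff_distrib)

lemma cop_scaleR: "cop (c *\<^sub>R x) a = c * cop x a"
  unfolding cop_def by simp

lemma cop_uminus: "cop (- x) a = - cop x a"
  unfolding cop_def by simp

lemma cop_uminus_root: "cop x (- a) = - cop x a"
  unfolding cop_def by simp

lemma cop_self: "a \<noteq> 0 \<Longrightarrow> cop a a = 2"
  unfolding cop_def by simp

lemma cop_sum: "cop (sum f S) a = (\<Sum>x\<in>S. cop (f x) a)"
  by (induction S rule: infinite_finite_induct) (simp_all add: cop_add cop_def[of 0])

lemma cop_eq_0_iff: "a \<noteq> 0 \<Longrightarrow> cop x a = 0 \<longleftrightarrow> x \<bullet> a = 0"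
  unfolding cop_def by simp

lemma cop_convex: "cop ((1 - t) *\<^sub>R y + t *\<^sub>R z) b = (1 - t) * cop y b + t * cop z b"
  by (simp add: cop_add cop_scaleR)

lemma refl_add: "refl a (x + y) = refl a x + refl a y"
  unfolding refl_def by (simp add: cop_add algebra_simps)

lemma refl_scaleR: "refl a (c *\<^sub>R x) = c *\<^sub>R refl a x"
  unfolding refl_def by (simp add: cop_scaleR algebra_simps)

lemma refl_sum: "refl a (sum f S) = (\<Sum>x\<in>S. refl a (f x))"
  by (induction S rule: infinite_finite_induct) (simp_all add: refl_add, simp_all add: refl_def cop_def)

lemma refl_self: "a \<noteq> 0 \<Longrightarrow> refl a a = - a"
  unfolding refl_def by (simp add: cop_self scaleR_2)

lemma refl_refl: "a \<noteq> 0 \<Longrightarrow> refl a (refl a x) = x"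
  unfolding refl_def by (simp add: cop_add cop_diff cop_scaleR cop_self algebra_simps)

lemma cop_refl: "a \<noteq> 0 \<Longrightarrow> cop (refl a x) b = cop x (refl a b)"
  unfolding refl_def cop_def
  by (simp add: inner_diff_left inner_diff_right inner_commute field_simps)

lemma cop_root_refl: "a \<noteq> 0 \<Longrightarrow> cop a (refl a b) = - cop a b"
  by (metis cop_refl cop_uminus refl_self)

lemma aff_refl_eq: "aff_refl p a m y = y - (cop y a - of_int m * real p) *\<^sub>R a"
  unfolding aff_refl_def refl_def by (simp add: algebra_simps)

lemma aff_refl_aff_refl: "a \<noteq> 0 \<Longrightarrow> aff_refl p a m (aff_refl p a m y) = y"
  unfolding aff_refl_eq by (simp add: cop_add cop_diff cop_scaleR cop_self algebra_simps)

lemma aff_refl_comp_self: "a \<noteq> 0 \<Longrightarrow> aff_refl p a m \<circ> aff_refl p a m = id"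
  by (rule ext) (simp add: aff_refl_aff_refl)

lemma aff_refl_uminus: "aff_refl p (- a) (- m) = aff_refl p a m"
  unfolding aff_refl_eq by (rule ext) (simp add: cop_uminus_root algebra_simps)

lemma aff_refl_add: "aff_refl p a m (y + v) = aff_refl p a m y + refl a v"
  unfolding aff_refl_def by (simp add: refl_add)

lemma aff_refl_fixed_iff: "a \<noteq> 0 \<Longrightarrow> aff_refl p a m y = y \<longleftrightarrow> cop y a = of_int m * real p"
  unfolding aff_refl_eq by simp

lemma aff_refl_convex:
  "aff_refl p a m ((1 - t) *\<^sub>R x + t *\<^sub>R y) = (1 - t) *\<^sub>R aff_refl p a m x + t *\<^sub>R aff_refl p a m y"
  by (simp only: aff_refl_eq cop_add cop_scaleR cop_diff) (simp add: algebra_simps)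

lemma cop_aff_refl_refl:
  assumes "a \<noteq> 0" "cop a b = of_int n"
  shows "cop (aff_refl p a m y) (refl a b) = cop y b - of_int (m * n) * real p"
  using assms unfolding aff_refl_def
  by (simp add: cop_add cop_scaleR cop_refl refl_refl cop_root_refl)

section \<open>Groups generated by involutions\<close>

lemma gen_group_gen: "s \<in> S \<Longrightarrow> s \<in> gen_group S"
  using gen_group.gen_step[OF _ gen_group.gen_id, of s S] by simp

lemma gen_group_comp: "u \<in> gen_group S \<Longrightarrow> v \<in> gen_group S \<Longrightarrow> u \<circ> v \<in> gen_group S"
  by (induction u rule: gen_group.induct) (auto simp: comp_assoc intro: gen_group.gen_step)

lemma gen_group_mono: "u \<in> gen_group S \<Longrightarrow> S \<subseteq> T \<Longrightarrow> u \<in> gen_group T"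
  by (induction u rule: gen_group.induct) (auto intro: gen_group.intros)

lemma gen_group_inverse:
  assumes "\<And>s. s \<in> S \<Longrightarrow> s \<circ> s = id" and "u \<in> gen_group S"
  shows "\<exists>u'\<in>gen_group S. u \<circ> u' = id \<and> u' \<circ> u = id"
  using assms(2)
proof (induction u rule: gen_group.induct)
  case gen_id
  show ?case by (rule bexI[of _ id]) (simp_all add: gen_group.gen_id)
next
  case (gen_step s w)
  then obtain w' where w': "w' \<in> gen_group S" "w \<circ> w' = id" "w' \<circ> w = id" by blast
  have "s \<circ> s = id" using assms(1) gen_step(1) by blast
  then have "(s \<circ> w) \<circ> (w' \<circ> s) = id" "(w' \<circ> s) \<circ> (s \<circ> w) = id"
    using w' by (metis comp_assoc id_comp)+
  moreover have "w' \<circ> s \<in> gen_group S" using gen_group_comp gen_group_gen w'(1) gen_step(1) by blast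
  ultimately show ?case by blast
qed

lemma prodl_Nil [simp]: "prodl [] = id"
  unfolding prodl_def by simp

lemma prodl_Cons [simp]: "prodl (f # fs) = f \<circ> prodl fs"
  unfolding prodl_def by simp

lemma prodl_append: "prodl (xs @ ys) = prodl xs \<circ> prodl ys"
  by (induction xs) (simp_all add: comp_assoc)

lemma prodl_rev_involutions:
  assumes "\<And>s. s \<in> set ss \<Longrightarrow> s \<circ> s = id"
  shows "prodl ss \<circ> prodl (rev ss) = id"
  using assms
proof (induction ss)
  case (Cons s ss)
  have "prodl (s # ss) \<circ> prodl (rev (s # ss)) = s \<circ> (prodl ss \<circ> prodl (rev ss)) \<circ> s"
    by (simp add: prodl_append comp_assoc)
  also have "\<dots> = s \<circ> s" using Cons by (simp only: comp_id list.set_intros)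
  also have "\<dots> = id" using Cons.prems by (meson list.set_intros(1))
  finally show ?case .
qed simp

lemma gen_group_prodl: "u \<in> gen_group S \<Longrightarrow> \<exists>ss. set ss \<subseteq> S \<and> u = prodl ss"
proof (induction u rule: gen_group.induct)
  case gen_id
  show ?case by (intro exI[of _ "[]"]) simp
next
  case (gen_step s w)
  then obtain ss where "set ss \<subseteq> S" "w = prodl ss" by blast
  with gen_step(1) show ?case by (intro exI[of _ "s # ss"]) simp
qed

lemma prodl_in_gen_group: "set ss \<subseteq> S \<Longrightarrow> prodl ss \<in> gen_group S"
  by (induction ss) (auto intro: gen_group.intros)

lemma prefixwise_snoc:
  assumes "\<forall>i < length xs. P (take i xs) (take (Suc i) xs)" and "P xs (xs @ [x])"
  shows "\<forall>i < length (xs @ [x]). P (take i (xs @ [x])) (take (Suc i) (xs @ [x]))"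
  using assms by (auto simp: less_Suc_eq)

lemma rtranclp_chain:
  "(\<forall>i < n. r (f i) (f (Suc i))) \<Longrightarrow> r\<^sup>*\<^sup>* (f 0) (f n)"
proof (induction n)
  case (Suc n)
  then have "r\<^sup>*\<^sup>* (f 0) (f n)" "r (f n) (f (Suc n))" by simp_all
  then show ?case by (rule rtranclp.rtrancl_into_rtrancl)
qed simp

lemma WIp_displacement_in_span: "u \<in> WIp I p \<Longrightarrow> u y - y \<in> span I"
  unfolding WIp_def
proof (induction u arbitrary: y rule: gen_group.induct)
  case gen_id
  then show ?case by (simp add: span_zero)
next
  case (gen_step s w)
  have "s (w y) - w y \<in> span I"
    using gen_step(1) by (auto simp: refl_def transl_def span_neg span_scale span_base)
  then have "(s (w y) - w y) + (w y - y) \<in> span I" using gen_step(3) by (rule span_add)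
  then show ?case by simp
qed

section \<open>Perturbation lemmas\<close>

lemma mult_neg_iff_segment_zero:
  fixes f0 f1 :: real
  shows "f0 * f1 < 0 \<longleftrightarrow> f0 \<noteq> 0 \<and> f1 \<noteq> 0 \<and> (\<exists>t\<in>{0..1}. (1 - t) * f0 + t * f1 = 0)"
proof
  assume neg: "f0 * f1 < 0"
  then have "f0 - f1 \<noteq> 0" by auto
  then have "(1 - f0 / (f0 - f1)) * f0 + f0 / (f0 - f1) * f1 = 0" by (simp add: field_simps)
  moreover have "f0 / (f0 - f1) \<in> {0..1}" using neg by (auto simp: mult_less_0_iff divide_simps)
  ultimately have "\<exists>t\<in>{0..1}. (1 - t) * f0 + t * f1 = 0" by blast
  then show "f0 \<noteq> 0 \<and> f1 \<noteq> 0 \<and> (\<exists>t\<in>{0..1}. (1 - t) * f0 + t * f1 = 0)" using neg by auto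
next
  assume "f0 \<noteq> 0 \<and> f1 \<noteq> 0 \<and> (\<exists>t\<in>{0..1}. (1 - t) * f0 + t * f1 = 0)"
  then obtain t where t: "0 \<le> t" "t \<le> 1" "(1 - t) * f0 + t * f1 = 0" and "f0 \<noteq> 0" "f1 \<noteq> 0"
    by auto
  show "f0 * f1 < 0"
  proof (rule ccontr)
    assume "\<not> f0 * f1 < 0"
    then have "0 < f0 * f1" using \<open>f0 \<noteq> 0\<close> \<open>f1 \<noteq> 0\<close> by (simp add: less_le)
    have "0 = f1 * ((1 - t) * f0 + t * f1)" using t(3) by simp
    also have "\<dots> = (1 - t) * (f0 * f1) + t * (f1 * f1)" by (simp add: algebra_simps)
    also have "\<dots> > 0" using \<open>0 < f0 * f1\<close> \<open>f1 \<noteq> 0\<close> t(1,2)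
      by (cases "t = 1") (auto intro: add_nonneg_pos add_pos_nonneg simp: zero_less_mult_iff)
    finally show False by simp
  qed
qed

lemma mult_neg_trans_iff:
  fixes u v w :: real
  assumes "u \<noteq> 0" "v \<noteq> 0" "w \<noteq> 0"
  shows "u * w < 0 \<longleftrightarrow> (u * v < 0 \<longleftrightarrow> \<not> v * w < 0)"
  using assms by (auto simp: mult_less_0_iff)

lemma strictly_between_multiples:
  fixes P x :: real
  assumes "P > 0" "\<forall>k::int. x \<noteq> of_int k * P"
  shows "\<exists>j::int. of_int j * P < x \<and> x < (of_int j + 1) * P"
proof -
  define j where "j = \<lfloor>x / P\<rfloor>"
  have "of_int j \<le> x / P" "x / P < of_int j + 1" unfolding j_def by linarith+
  moreover have "x \<noteq> of_int j * P" using assms(2) by blast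
  ultimately show ?thesis using assms(1) by (auto simp: field_simps intro!: exI[of _ j])
qed

lemma between_multiples_not_multiple:
  fixes P x :: real
  assumes "of_int j * P < x" "x < (of_int j + 1) * P"
  shows "x \<noteq> of_int k * P"
proof
  assume x: "x = of_int k * P"
  have "P > 0" using assms unfolding distrib_right by simp
  with assms x have "j < k" "k < j + 1" by (simp_all add: mult_less_cancel_right)
  then show False by simp
qed

lemma same_strip_mult_pos:
  fixes P x y :: real
  assumes "of_int j * P < x" "x < (of_int j + 1) * P" "of_int j * P < y" "y < (of_int j + 1) * P"
  shows "0 < (x - of_int k * P) * (y - of_int k * P)"
proof -
  have "P > 0" using assms(1,2) unfolding distrib_right by simp
  show ?thesis
  proof (cases "k \<le> j")
    case True
    then have "of_int k * P \<le> of_int j * P" using \<open>P > 0\<close> by simp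
    then show ?thesis using assms by (intro mult_pos_pos) linarith+
  next
    case False
    then have "(of_int j + 1) * P \<le> of_int k * P" using \<open>P > 0\<close> by simp
    then show ?thesis using assms by (intro mult_neg_neg) linarith+
  qed
qed

lemma shifted_multiple_product:
  fixes P d :: real
  assumes "0 < d" "d < P"
  shows "(of_int m * P + d - of_int k * P) * (of_int m * P - d - of_int k * P) < 0 \<longleftrightarrow> k = m"
    and "(of_int m * P + d - of_int k * P) * (of_int m * P - d - of_int k * P) \<noteq> 0"
proof -
  define x where "x = of_int (m - k) * P"
  have eq: "(of_int m * P + d - of_int k * P) * (of_int m * P - d - of_int k * P) = x * x - d * d"
    unfolding x_def by (simp add: algebra_simps)
  have pos: "0 < x * x - d * d" if "k \<noteq> m"
  proof -
    have "1 \<le> \<bar>real_of_int (m - k)\<bar>" using that by linarith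
    then have "\<bar>P\<bar> \<le> \<bar>x\<bar>" unfolding x_def using assms by (simp add: abs_mult mult_le_cancel_right1)
    then have "P * P \<le> x * x" by (simp add: abs_le_square_iff power2_eq_square)
    moreover have "d * d < P * P" using assms by (simp add: mult_strict_mono)
    ultimately show ?thesis by linarith
  qed
  have neg: "x * x - d * d < 0" if "k = m" using that assms unfolding x_def by simp
  show "(of_int m * P + d - of_int k * P) * (of_int m * P - d - of_int k * P) < 0 \<longleftrightarrow> k = m"
    unfolding eq using pos neg by (cases "k = m") auto
  show "(of_int m * P + d - of_int k * P) * (of_int m * P - d - of_int k * P) \<noteq> 0"
    unfolding eq using pos neg by (cases "k = m") auto
qed

lemma eventually_at_right_0_witness:
  assumes "eventually P (at_right (0::real))"
  shows "\<exists>t>0. P t"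
proof -
  obtain b where "b > 0" "\<forall>t>0. t < b \<longrightarrow> P t"
    using assms unfolding eventually_at_right_field by auto
  then show ?thesis by (intro exI[of _ "b / 2"]) auto
qed

lemma eventually_affine_between:
  fixes c d lo hi :: real
  assumes "lo < c" "c < hi"
  shows "\<forall>\<^sub>F t in at_right 0. lo < c + t * d \<and> c + t * d < hi"
proof -
  have "((\<lambda>t. c + t * d) \<longlongrightarrow> c + 0 * d) (at_right 0)"
    by (intro tendsto_intros)
  then have lim: "((\<lambda>t. c + t * d) \<longlongrightarrow> c) (at_right 0)" by simp
  show ?thesis
    using order_tendstoD(1)[OF lim assms(1)] order_tendstoD(2)[OF lim assms(2)] by (rule eventually_conj)
qed

lemma eventually_affine_nonzero:
  fixes c d :: real
  assumes "c \<noteq> 0 \<or> d \<noteq> 0"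
  shows "\<forall>\<^sub>F t in at_right 0. c + t * d \<noteq> 0"
proof (cases "c = 0")
  case True
  then show ?thesis using assms eventually_at_right_less[of "0::real"] by (auto elim: eventually_mono)
next
  case False
  then have "c < 0 \<or> 0 < c" by linarith
  then show ?thesis
  proof
    assume "c < 0"
    then show ?thesis using eventually_affine_between[of "c - 1" c 0 d] by (auto elim: eventually_mono)
  next
    assume "0 < c"
    then show ?thesis using eventually_affine_between[of 0 c "c + 1" d] by (auto elim: eventually_mono)
  qed
qed

lemma eventually_affine_sign:
  fixes c d :: real
  assumes "c \<noteq> 0"
  shows "\<forall>\<^sub>F t in at_right 0. (c + t * d < 0 \<longleftrightarrow> c < 0)"
proof (cases "c < 0")
  case True
  then show ?thesis using eventually_affine_between[of "c - 1" c 0 d] by (auto elim: eventually_mono)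
next
  case False
  with assms have "0 < c" by linarith
  then show ?thesis using eventually_affine_between[of 0 c "c + 1" d] by (auto elim: eventually_mono)
qed

lemma eventually_affine_not_multiple:
  fixes P c d :: real
  assumes "P > 0" "d \<noteq> 0"
  shows "\<forall>\<^sub>F t in at_right 0. \<forall>k::int. c + t * d \<noteq> of_int k * P"
proof (cases "\<exists>k::int. c = of_int k * P")
  case True
  then obtain k where k: "c = of_int k * P" by blast
  have "\<forall>\<^sub>F t in at_right 0. (of_int k - 1) * P < c + t * d \<and> c + t * d < (of_int k + 1) * P"
    using assms k by (intro eventually_affine_between) (simp_all add: algebra_simps)
  moreover have "\<forall>\<^sub>F t in at_right 0. (c - of_int k * P) + t * d \<noteq> 0"
    using assms by (intro eventually_affine_nonzero) simp
  ultimately show ?thesis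
  proof eventually_elim
    case (elim t)
    show ?case
    proof (intro allI notI)
      fix k' :: int
      assume "c + t * d = of_int k' * P"
      with elim have "k' \<noteq> k" by auto
      moreover from elim \<open>c + t * d = of_int k' * P\<close> assms(1)
      have "of_int (k - 1) < real_of_int k'" "real_of_int k' < of_int (k + 1)"
        by (simp_all add: mult_less_cancel_right)
      ultimately show False by linarith
    qed
  qed
next
  case False
  then obtain j :: int where "of_int j * P < c" "c < (of_int j + 1) * P"
    using strictly_between_multiples[OF assms(1)] by blast
  then have "\<forall>\<^sub>F t in at_right 0. of_int j * P < c + t * d \<and> c + t * d < (of_int j + 1) * P"
    by (rule eventually_affine_between)
  then show ?thesis
  proof (rule eventually_mono)
    fix t
    assume "of_int j * P < c + t * d \<and> c + t * d < (of_int j + 1) * P"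
    then show "\<forall>k::int. c + t * d \<noteq> of_int k * P"
      using between_multiples_not_multiple[of j P "c + t * d"] by blast
  qed
qed

lemma exists_nonorthogonal_vector:
  fixes D :: "'a::real_inner set"
  assumes "finite D" "0 \<notin> D"
  shows "\<exists>v. \<forall>d\<in>D. v \<bullet> d \<noteq> 0"
  using assms
proof (induction D rule: finite_induct)
  case (insert d D)
  then obtain v where v: "\<forall>d'\<in>D. v \<bullet> d' \<noteq> 0" by auto
  show ?case
  proof (cases "v \<bullet> d = 0")
    case True
    have "\<forall>d'\<in>D. \<forall>\<^sub>F t in at_right 0. v \<bullet> d' + t * (d \<bullet> d') \<noteq> 0"
      using v by (blast intro: eventually_affine_nonzero)
    then have "\<forall>\<^sub>F t in at_right 0. \<forall>d'\<in>D. v \<bullet> d' + t * (d \<bullet> d') \<noteq> 0"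
      by (rule eventually_ball_finite[OF insert(1)])
    then obtain t where "t > 0" "\<forall>d'\<in>D. v \<bullet> d' + t * (d \<bullet> d') \<noteq> 0"
      using eventually_at_right_0_witness by blast
    then have "\<forall>d'\<in>D. (v + t *\<^sub>R d) \<bullet> d' \<noteq> 0" by (simp add: inner_add_left)
    moreover have "(v + t *\<^sub>R d) \<bullet> d \<noteq> 0" using True \<open>t > 0\<close> insert(4) by (simp add: inner_add_left)
    ultimately show ?thesis by blast
  next
    case False
    with v show ?thesis by (intro exI[of _ v]) simp
  qed
qed simp

lemma exists_strict_arg_min:
  fixes \<tau> :: "'l \<Rightarrow> 'b::linorder"
  assumes "finite V" "V \<noteq> {}" "inj_on \<tau> V"
  shows "\<exists>i\<in>V. \<forall>l\<in>V - {i}. \<tau> i < \<tau> l"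
proof -
  obtain i where "is_arg_min \<tau> (\<lambda>l. l \<in> V) i" using ex_is_arg_min_if_finite assms(1,2) by blast
  then have "i \<in> V" "\<forall>l\<in>V. \<tau> i \<le> \<tau> l" unfolding is_arg_min_linorder by auto
  then have "\<tau> i < \<tau> l" if "l \<in> V - {i}" for l
    using that assms(3) inj_onD[of \<tau> V i l] by (auto simp: order_le_less)
  then show ?thesis using \<open>i \<in> V\<close> by blast
qed

lemma exit_times_inj_on:
  fixes f :: "'l \<Rightarrow> 'a \<Rightarrow> real"
  assumes pos: "\<forall>l\<in>L. 0 < f l y"
    and distinct: "\<forall>l\<in>L. \<forall>l'\<in>L. l \<noteq> l' \<longrightarrow> f l y * f l' z \<noteq> f l' y * f l z"
  shows "inj_on (\<lambda>l. f l y / (f l y - f l z)) {l \<in> L. f l z < 0}"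
proof (rule inj_onI, rule ccontr)
  fix l l'
  assume l: "l \<in> {l \<in> L. f l z < 0}" "l' \<in> {l \<in> L. f l z < 0}"
    "f l y / (f l y - f l z) = f l' y / (f l' y - f l' z)" "l \<noteq> l'"
  moreover have "0 < f l y - f l z" "0 < f l' y - f l' z" using l(1,2) pos by auto
  ultimately have "f l y * (f l' y - f l' z) = f l' y * (f l y - f l z)" by (simp add: field_simps)
  then show False using distinct l by (auto simp: algebra_simps)
qed

lemma first_exit_point:
  fixes f :: "'l \<Rightarrow> 'a::real_inner \<Rightarrow> real" and g :: "'l \<Rightarrow> 'a"
  assumes affine: "\<And>l x v. f l (x + v) = f l x + g l \<bullet> v"
    and "finite L" and pos: "\<forall>l\<in>L. 0 < f l y" and "i0 \<in> L" "f i0 z < 0"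
    and distinct: "\<forall>l\<in>L. \<forall>l'\<in>L. l \<noteq> l' \<longrightarrow> f l y * f l' z \<noteq> f l' y * f l z"
  shows "\<exists>i\<in>L. f i z < 0 \<and> (\<exists>x. f i x = 0 \<and> (\<forall>l\<in>L - {i}. 0 < f l x))"
proof -
  define V where "V = {l \<in> L. f l z < 0}"
  define \<tau> where "\<tau> l = f l y / (f l y - f l z)" for l
  have gap: "0 < f l y - f l z" if "l \<in> V" for l
    using that pos unfolding V_def by fastforce
  have "finite V" "i0 \<in> V" using assms unfolding V_def by auto
  then obtain i where i: "i \<in> V" and \<tau>_strict: "\<forall>l\<in>V - {i}. \<tau> i < \<tau> l"
    using exists_strict_arg_min exit_times_inj_on[OF pos distinct] unfolding V_def \<tau>_def by blast
  have i_pos: "0 < f i y" and i_neg: "f i z < 0" using i pos unfolding V_def by auto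
  then have \<tau>_i: "0 < \<tau> i" "\<tau> i < 1" unfolding \<tau>_def by (auto simp: divide_simps)
  define x where "x = y + \<tau> i *\<^sub>R (z - y)"
  have f_x: "f l x = (1 - \<tau> i) * f l y + \<tau> i * f l z" for l
  proof -
    have d: "g l \<bullet> (z - y) = f l z - f l y" using affine[of l y "z - y"] by simp
    have "f l x = f l y + \<tau> i * (g l \<bullet> (z - y))" unfolding x_def affine inner_scaleR_right ..
    then show ?thesis unfolding d by (simp add: algebra_simps)
  qed
  have "f i x = 0" using i_pos i_neg unfolding f_x \<tau>_def by (simp add: field_simps)
  moreover have "0 < f l x" if l: "l \<in> L - {i}" for l
  proof (cases "l \<in> V")
    case True
    have "\<tau> i * (f l y - f l z) < \<tau> l * (f l y - f l z)"
      using \<tau>_strict True l gap[OF True] by (intro mult_strict_right_mono) auto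
    also have "\<tau> l * (f l y - f l z) = f l y" unfolding \<tau>_def using gap[OF True] by simp
    finally show ?thesis unfolding f_x by (simp add: algebra_simps)
  next
    case False
    then have "0 \<le> f l z" using l unfolding V_def by auto
    then show ?thesis unfolding f_x using \<tau>_i pos l by (simp add: add_pos_nonneg)
  qed
  ultimately show ?thesis using i i_neg unfolding V_def by blast
qed

text \<open>A generic perturbation of \<open>z\<close> makes the times at which the segment from \<open>y\<close> leaves
  the half-spaces pairwise distinct; the half-space left first is bounded by a facet.\<close>

lemma exists_separating_facet:
  fixes f :: "'l \<Rightarrow> 'a::real_inner \<Rightarrow> real" and g :: "'l \<Rightarrow> 'a"
  assumes affine: "\<And>l x v. f l (x + v) = f l x + g l \<bullet> v"
    and fin: "finite L" and pos: "\<forall>l\<in>L. 0 < f l y" and nonzero: "\<forall>l\<in>L. f l z \<noteq> 0"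
    and "i0 \<in> L" "f i0 z < 0"
    and distinct: "\<forall>l\<in>L. \<forall>l'\<in>L. l \<noteq> l' \<longrightarrow> f l y *\<^sub>R g l' \<noteq> f l' y *\<^sub>R g l"
  shows "\<exists>i\<in>L. f i z < 0 \<and> (\<exists>x. f i x = 0 \<and> (\<forall>l\<in>L - {i}. 0 < f l x))"
proof -
  define P where "P = {q \<in> L \<times> L. fst q \<noteq> snd q}"
  define dv where "dv q = f (fst q) y *\<^sub>R g (snd q) - f (snd q) y *\<^sub>R g (fst q)" for q
  have "finite P" unfolding P_def using fin by (simp add: finite_subset[of _ "L \<times> L"])
  moreover have "0 \<notin> dv ` P" using distinct unfolding P_def dv_def by auto
  ultimately obtain v where v: "\<forall>q\<in>P. v \<bullet> dv q \<noteq> 0"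
    using exists_nonorthogonal_vector[of "dv ` P"] by (auto simp: inner_commute)
  have "\<forall>l\<in>L. \<forall>\<^sub>F t in at_right 0. (f l z + t * (g l \<bullet> v) < 0 \<longleftrightarrow> f l z < 0)"
    using nonzero by (blast intro: eventually_affine_sign)
  moreover have "\<forall>q\<in>P. \<forall>\<^sub>F t in at_right 0.
      (f (fst q) y * f (snd q) z - f (snd q) y * f (fst q) z) + t * (v \<bullet> dv q) \<noteq> 0"
    using v by (blast intro: eventually_affine_nonzero)
  ultimately have "\<forall>\<^sub>F t in at_right 0. (\<forall>l\<in>L. (f l z + t * (g l \<bullet> v) < 0 \<longleftrightarrow> f l z < 0)) \<and>
      (\<forall>q\<in>P. (f (fst q) y * f (snd q) z - f (snd q) y * f (fst q) z) + t * (v \<bullet> dv q) \<noteq> 0)"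
    using fin \<open>finite P\<close> by (intro eventually_conj eventually_ball_finite)
  then obtain t where t: "\<forall>l\<in>L. (f l z + t * (g l \<bullet> v) < 0 \<longleftrightarrow> f l z < 0)"
    "\<forall>q\<in>P. (f (fst q) y * f (snd q) z - f (snd q) y * f (fst q) z) + t * (v \<bullet> dv q) \<noteq> 0"
    using eventually_at_right_0_witness by blast
  define z' where "z' = z + t *\<^sub>R v"
  have sign: "f l z' < 0 \<longleftrightarrow> f l z < 0" if "l \<in> L" for l
    using t(1) that unfolding z'_def affine by simp
  have "f l y * f l' z' \<noteq> f l' y * f l z'" if "l \<in> L" "l' \<in> L" "l \<noteq> l'" for l l'
  proof -
    have "(l, l') \<in> P" using that unfolding P_def by simp
    then have "(f l y * f l' z - f l' y * f l z) + t * (v \<bullet> dv (l, l')) \<noteq> 0"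
      using t(2) by (metis fst_conv snd_conv)
    then show ?thesis unfolding z'_def affine dv_def
      by (simp add: inner_diff_right inner_commute algebra_simps)
  qed
  then obtain i where "i \<in> L" "f i z' < 0" "\<exists>x. f i x = 0 \<and> (\<forall>l\<in>L - {i}. 0 < f l x)"
    using first_exit_point[OF affine fin pos \<open>i0 \<in> L\<close>, of z'] sign \<open>i0 \<in> L\<close> \<open>f i0 z < 0\<close> by blast
  then show ?thesis using sign by blast
qed

section \<open>Reflecting hyperplanes\<close>

definition separates :: "'a::real_vector set \<Rightarrow> 'a \<Rightarrow> 'a \<Rightarrow> bool" where
  "separates H y z \<longleftrightarrow> y \<notin> H \<and> z \<notin> H \<and> (\<exists>t\<in>{0..1}. (1 - t) *\<^sub>R y + t *\<^sub>R z \<in> H)"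

locale affine_root_system =
  fixes Phi Pos :: "'a::euclidean_space set" and p :: nat
  assumes finite_Phi: "finite Phi" and zero_notin_Phi: "0 \<notin> Phi"
    and refl_closed: "\<And>a b. a \<in> Phi \<Longrightarrow> b \<in> Phi \<Longrightarrow> refl a b \<in> Phi"
    and reduced: "\<And>a c. a \<in> Phi \<Longrightarrow> c *\<^sub>R a \<in> Phi \<Longrightarrow> c = 1 \<or> c = -1"
    and cop_root_int: "\<And>a b. a \<in> Phi \<Longrightarrow> b \<in> Phi \<Longrightarrow> cop a b \<in> \<int>"
    and Pos_subset: "Pos \<subseteq> Phi" and Phi_eq: "Phi = Pos \<union> uminus ` Pos"
    and Pos_disjoint: "Pos \<inter> uminus ` Pos = {}"
    and p_pos: "p > 0"
begin

definition hyperplane :: "'a \<Rightarrow> int \<Rightarrow> 'a set" where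
  "hyperplane b k = {y. cop y b = of_int k * real p}"

definition hyperplanes :: "'a set set" where
  "hyperplanes = {hyperplane b k | b k. b \<in> Phi}"

definition separating :: "'a \<Rightarrow> 'a \<Rightarrow> 'a set set" where
  "separating y z = {H \<in> hyperplanes. separates H y z}"

definition regular :: "'a \<Rightarrow> bool" where
  "regular y \<longleftrightarrow> (\<forall>H\<in>hyperplanes. y \<notin> H)"

lemma root_nonzero: "a \<in> Phi \<Longrightarrow> a \<noteq> 0"
  using zero_notin_Phi by auto

lemma pos_root: "a \<in> Pos \<Longrightarrow> a \<in> Phi"
  using Pos_subset by auto

lemma pos_root_nonzero: "a \<in> Pos \<Longrightarrow> a \<noteq> 0"
  using root_nonzero pos_root by blast

lemma finite_Pos: "finite Pos"
  using finite_Phi Pos_subset finite_subset by blast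

lemma root_cases: "a \<in> Phi \<Longrightarrow> a \<in> Pos \<or> - a \<in> Pos"
  using Phi_eq by (auto simp: image_iff)

lemma uminus_pos_root: "a \<in> Pos \<Longrightarrow> - a \<notin> Pos"
  using Pos_disjoint by (auto simp: image_iff)

lemma hyperplane_uminus: "hyperplane (- b) (- k) = hyperplane b k"
  unfolding hyperplane_def by (auto simp: cop_uminus_root)

lemma hyperplane_in_hyperplanes: "b \<in> Phi \<Longrightarrow> hyperplane b k \<in> hyperplanes"
  unfolding hyperplanes_def by auto

lemma hyperplanesE:
  assumes "H \<in> hyperplanes"
  obtains b k where "b \<in> Pos" "H = hyperplane b k"
proof -
  obtain b k where "b \<in> Phi" "H = hyperplane b k" using assms unfolding hyperplanes_def by auto
  then show ?thesis using that root_cases hyperplane_uminus by metis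
qed

lemma separates_hyperplane_iff:
  "separates (hyperplane b k) y z \<longleftrightarrow>
    (cop y b - of_int k * real p) * (cop z b - of_int k * real p) < 0"
proof -
  have mem: "x \<in> hyperplane b k \<longleftrightarrow> cop x b - of_int k * real p = 0" for x
    unfolding hyperplane_def by simp
  have "(1 - t) *\<^sub>R y + t *\<^sub>R z \<in> hyperplane b k \<longleftrightarrow>
     (1 - t) * (cop y b - of_int k * real p) + t * (cop z b - of_int k * real p) = 0" for t
    unfolding mem cop_convex by (simp add: algebra_simps)
  then show ?thesis unfolding separates_def mult_neg_iff_segment_zero mem by blast
qed

lemma hyperplane_in_separating_iff:
  "b \<in> Phi \<Longrightarrow> hyperplane b k \<in> separating y z \<longleftrightarrow>
    (cop y b - of_int k * real p) * (cop z b - of_int k * real p) < 0"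
  unfolding separating_def using separates_hyperplane_iff hyperplane_in_hyperplanes by simp

lemma regular_iff: "regular y \<longleftrightarrow> (\<forall>b\<in>Pos. \<forall>k. cop y b \<noteq> of_int k * real p)"
proof
  assume r: "regular y"
  show "\<forall>b\<in>Pos. \<forall>k. cop y b \<noteq> of_int k * real p"
  proof (intro ballI allI)
    fix b k
    assume "b \<in> Pos"
    then have "y \<notin> hyperplane b k"
      using r hyperplane_in_hyperplanes pos_root unfolding regular_def by blast
    then show "cop y b \<noteq> of_int k * real p" unfolding hyperplane_def by simp
  qed
next
  assume "\<forall>b\<in>Pos. \<forall>k. cop y b \<noteq> of_int k * real p"
  then show "regular y" unfolding regular_def by (auto elim!: hyperplanesE simp: hyperplane_def)
qed

lemma separating_sym: "separating y z = separating z y"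
proof -
  have "separates H y z \<longleftrightarrow> separates H z y" if "H \<in> hyperplanes" for H
    using that by (auto elim!: hyperplanesE simp: separates_hyperplane_iff mult.commute)
  then show ?thesis unfolding separating_def by blast
qed

lemma finite_separating: "finite (separating y z)"
proof -
  define N where "N b = \<lceil>(\<bar>cop y b\<bar> + \<bar>cop z b\<bar>) / real p\<rceil>" for b
  have sub: "separating y z \<subseteq> (\<Union>b\<in>Pos. hyperplane b ` {- N b .. N b})"
  proof
    fix H assume H: "H \<in> separating y z"
    then obtain b k where b: "b \<in> Pos" "H = hyperplane b k"
      unfolding separating_def by (auto elim: hyperplanesE)
    then have "(cop y b - of_int k * real p) * (cop z b - of_int k * real p) < 0"
      using H separates_hyperplane_iff unfolding separating_def by blast
    then have "\<bar>of_int k\<bar> * real p \<le> \<bar>cop y b\<bar> + \<bar>cop z b\<bar>"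
      by (auto simp: mult_less_0_iff abs_mult)
    then have "of_int \<bar>k\<bar> \<le> (\<bar>cop y b\<bar> + \<bar>cop z b\<bar>) / real p"
      using p_pos by (simp add: pos_le_divide_eq)
    then have "\<bar>k\<bar> \<le> N b" unfolding N_def by (simp add: le_ceiling_iff)
    then have "k \<in> {- N b .. N b}" by auto
    then show "H \<in> (\<Union>b\<in>Pos. hyperplane b ` {- N b .. N b})" using b by blast
  qed
  show ?thesis by (rule finite_subset[OF sub]) (use finite_Pos in blast)
qed

lemma separating_triangle:
  assumes "regular x" "regular y" "regular z"
  shows "H \<in> separating x z \<longleftrightarrow> (H \<in> separating x y \<longleftrightarrow> H \<notin> separating y z)"
proof (cases "H \<in> hyperplanes")
  case True
  then obtain b k where b: "b \<in> Pos" "H = hyperplane b k" by (rule hyperplanesE)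
  then have "cop x b - of_int k * real p \<noteq> 0" "cop y b - of_int k * real p \<noteq> 0"
    "cop z b - of_int k * real p \<noteq> 0"
    using assms unfolding regular_iff by auto
  then show ?thesis
    unfolding b(2) hyperplane_in_separating_iff[OF pos_root[OF b(1)]] by (rule mult_neg_trans_iff)
next
  case False
  then show ?thesis unfolding separating_def by auto
qed

lemma Wp_induct [consumes 1, case_names id step]:
  assumes "w \<in> Wp Phi p" "P id"
    "\<And>a m w. a \<in> Phi \<Longrightarrow> w \<in> Wp Phi p \<Longrightarrow> P w \<Longrightarrow> P (aff_refl p a m \<circ> w)"
  shows "P w"
  using assms(1) unfolding Wp_def
proof (induction w rule: gen_group.induct)
  case gen_id
  show ?case by (rule assms(2))
next
  case (gen_step s w)
  then show ?case using assms(3) unfolding Wp_def by blast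
qed

lemma aff_refl_in_Wp: "a \<in> Phi \<Longrightarrow> aff_refl p a m \<in> Wp Phi p"
  unfolding Wp_def by (rule gen_group_gen) blast

lemma Wp_comp: "u \<in> Wp Phi p \<Longrightarrow> v \<in> Wp Phi p \<Longrightarrow> u \<circ> v \<in> Wp Phi p"
  unfolding Wp_def by (rule gen_group_comp)

lemma Wp_inverse: "w \<in> Wp Phi p \<Longrightarrow> \<exists>w'\<in>Wp Phi p. w \<circ> w' = id \<and> w' \<circ> w = id"
  unfolding Wp_def by (rule gen_group_inverse) (auto simp: aff_refl_comp_self root_nonzero)

lemma Wp_convex: "w \<in> Wp Phi p \<Longrightarrow> w ((1 - t) *\<^sub>R x + t *\<^sub>R y) = (1 - t) *\<^sub>R w x + t *\<^sub>R w y"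
  by (induction w rule: Wp_induct) (simp_all add: aff_refl_convex)

lemma inj_Wp: "w \<in> Wp Phi p \<Longrightarrow> inj w"
  using Wp_inverse by (metis inj_on_id inj_on_imageI2 image_comp image_id)

lemma aff_refl_conj:
  assumes a: "a \<in> Phi" and b: "b \<in> Phi"
  shows "\<exists>c\<in>Phi. \<exists>k'. aff_refl p a m ` hyperplane b k = hyperplane c k' \<and>
           aff_refl p a m \<circ> aff_refl p b k = aff_refl p c k' \<circ> aff_refl p a m"
proof -
  let ?r = "aff_refl p a m"
  obtain n where n: "cop a b = of_int n" using cop_root_int[OF a b] Ints_cases by blast
  define c where "c = refl a b"
  define k' where "k' = k - m * n"
  have a0: "a \<noteq> 0" using root_nonzero a by blast
  have rr: "?r (?r y) = y" for y using aff_refl_aff_refl[OF a0] .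
  have cop_c: "cop (?r y) c = cop y b - of_int (m * n) * real p" for y
    unfolding c_def using cop_aff_refl_refl[OF a0 n] .
  have "?r ` hyperplane b k = hyperplane c k'"
  proof -
    have "z \<in> ?r ` hyperplane b k \<longleftrightarrow> ?r z \<in> hyperplane b k" for z
    proof
      assume "z \<in> ?r ` hyperplane b k"
      then show "?r z \<in> hyperplane b k" using rr by auto
    next
      assume "?r z \<in> hyperplane b k"
      then have "?r (?r z) \<in> ?r ` hyperplane b k" by (rule imageI)
      then show "z \<in> ?r ` hyperplane b k" using rr by simp
    qed
    moreover have "?r z \<in> hyperplane b k \<longleftrightarrow> z \<in> hyperplane c k'" for z
      using cop_c[of "?r z"] unfolding rr hyperplane_def k'_def by (auto simp: algebra_simps)
    ultimately show ?thesis by blast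
  qed
  moreover have "?r (aff_refl p b k y) = aff_refl p c k' (?r y)" for y
  proof -
    have "?r (aff_refl p b k y) = ?r (y + (of_int k * real p - cop y b) *\<^sub>R b)"
      by (simp add: aff_refl_eq[of p b k] algebra_simps)
    also have "\<dots> = ?r y - (cop y b - of_int k * real p) *\<^sub>R c"
      unfolding aff_refl_add refl_scaleR c_def by (simp add: algebra_simps)
    also have "\<dots> = aff_refl p c k' (?r y)"
      unfolding aff_refl_eq[of p c] cop_c by (simp add: k'_def algebra_simps)
    finally show ?thesis .
  qed
  moreover have "c \<in> Phi" unfolding c_def using refl_closed a b by blast
  ultimately show ?thesis by (intro bexI[of _ c] exI[of _ k']) auto
qed

lemma Wp_conj:
  assumes "w \<in> Wp Phi p" "b \<in> Phi"
  shows "\<exists>c\<in>Phi. \<exists>k'. w ` hyperplane b k = hyperplane c k' \<and> w \<circ> aff_refl p b k = aff_refl p c k' \<circ> w"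
  using assms
proof (induction w arbitrary: b k rule: Wp_induct)
  case (step a m w)
  obtain c k' where c: "c \<in> Phi" "w ` hyperplane b k = hyperplane c k'"
    "w \<circ> aff_refl p b k = aff_refl p c k' \<circ> w" using step by blast
  obtain d k'' where d: "d \<in> Phi" "aff_refl p a m ` hyperplane c k' = hyperplane d k''"
    "aff_refl p a m \<circ> aff_refl p c k' = aff_refl p d k'' \<circ> aff_refl p a m"
    using aff_refl_conj[OF step(1) c(1)] by blast
  have "(aff_refl p a m \<circ> w) ` hyperplane b k = hyperplane d k''"
    using c(2) d(2) by (metis image_comp)
  moreover have "(aff_refl p a m \<circ> w) \<circ> aff_refl p b k = aff_refl p d k'' \<circ> (aff_refl p a m \<circ> w)"
    by (metis c(3) d(3) comp_assoc)
  ultimately show ?case using d(1) by blast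
qed auto

lemma aff_refl_eq_if_hyperplane_eq:
  assumes b: "b \<in> Phi" and c: "c \<in> Phi" and eq: "hyperplane b k = hyperplane c k'"
  shows "aff_refl p b k = aff_refl p c k'"
proof -
  have b0: "b \<noteq> 0" and c0: "c \<noteq> 0" using root_nonzero b c by blast+
  define \<kappa> where "\<kappa> = (c \<bullet> b) / (b \<bullet> b)"
  define v where "v = c - \<kappa> *\<^sub>R b"
  define y where "y = (of_int k * real p / 2) *\<^sub>R b"
  have vb: "v \<bullet> b = 0" unfolding v_def \<kappa>_def using b0 by (simp add: inner_diff_left)
  have yb: "y \<in> hyperplane b k" unfolding y_def hyperplane_def using b0 by (simp add: cop_scaleR cop_self)
  moreover have "cop v b = 0" using vb b0 cop_eq_0_iff by blast
  ultimately have "y + v \<in> hyperplane b k" unfolding hyperplane_def by (simp add: cop_add)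
  then have yc: "y \<in> hyperplane c k'" "y + v \<in> hyperplane c k'" using yb eq by auto
  then have "cop v c = 0" unfolding hyperplane_def by (simp add: cop_add)
  then have "v \<bullet> c = 0" using c0 cop_eq_0_iff by blast
  then have "v \<bullet> v = 0" unfolding v_def by (simp add: inner_diff_right vb[unfolded v_def])
  then have c_eq: "c = \<kappa> *\<^sub>R b" unfolding v_def by simp
  then have \<kappa>0: "\<kappa> \<noteq> 0" using c0 by auto
  have cop_c: "cop x c = cop x b / \<kappa>" for x unfolding c_eq cop_def by (simp add: field_simps)
  have "cop y b / \<kappa> = of_int k' * real p" using yc(1) unfolding hyperplane_def cop_c by simp
  then have kk: "of_int k * real p = \<kappa> * (of_int k' * real p)"
    using yb \<kappa>0 unfolding hyperplane_def by (auto simp: field_simps)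
  show ?thesis
  proof
    fix x
    have "aff_refl p c k' x = x - (cop x b / \<kappa> - of_int k' * real p) *\<^sub>R (\<kappa> *\<^sub>R b)"
      by (simp only: aff_refl_eq cop_c) (simp only: c_eq)
    also have "\<dots> = aff_refl p b k x" unfolding aff_refl_eq kk using \<kappa>0 by (simp add: algebra_simps)
    finally show "aff_refl p b k x = aff_refl p c k' x" by simp
  qed
qed

lemma Wp_conj_hyperplane:
  assumes "w \<in> Wp Phi p" "b \<in> Phi" "c \<in> Phi" "w ` hyperplane b k = hyperplane c k'"
  shows "w \<circ> aff_refl p b k = aff_refl p c k' \<circ> w"
proof -
  obtain d k'' where "d \<in> Phi" "w ` hyperplane b k = hyperplane d k''"
    "w \<circ> aff_refl p b k = aff_refl p d k'' \<circ> w"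
    using Wp_conj[OF assms(1,2)] by blast
  then show ?thesis using aff_refl_eq_if_hyperplane_eq assms(3,4) by metis
qed

lemma hyperplane_pos_root:
  assumes "c \<in> Phi"
  obtains c' k' where "c' \<in> Pos" "hyperplane c k = hyperplane c' k'" "aff_refl p c k = aff_refl p c' k'"
  using root_cases[OF assms] hyperplane_uminus aff_refl_uminus by (metis minus_minus)

lemma Wp_image_hyperplane:
  assumes "w \<in> Wp Phi p" "b \<in> Phi"
  obtains c k' where "c \<in> Pos" "w ` hyperplane b k = hyperplane c k'"
  using Wp_conj[OF assms] hyperplane_pos_root by metis

lemma Wp_image_hyperplanes: "w \<in> Wp Phi p \<Longrightarrow> H \<in> hyperplanes \<Longrightarrow> w ` H \<in> hyperplanes"
  by (metis Wp_image_hyperplane hyperplanesE hyperplane_in_hyperplanes pos_root)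

lemma Wp_separates_iff:
  assumes "w \<in> Wp Phi p"
  shows "separates (w ` H) (w y) (w z) \<longleftrightarrow> separates H y z"
proof -
  have "inj w" using inj_Wp[OF assms] .
  moreover have "(1 - t) *\<^sub>R w y + t *\<^sub>R w z = w ((1 - t) *\<^sub>R y + t *\<^sub>R z)" for t
    using Wp_convex[OF assms] by simp
  ultimately show ?thesis unfolding separates_def by (simp add: inj_image_mem_iff)
qed

lemma Wp_separating:
  assumes w: "w \<in> Wp Phi p"
  shows "separating (w y) (w z) = (\<lambda>H. w ` H) ` separating y z"
proof
  show "(\<lambda>H. w ` H) ` separating y z \<subseteq> separating (w y) (w z)"
    unfolding separating_def using Wp_image_hyperplanes[OF w] Wp_separates_iff[OF w] by auto
next
  show "separating (w y) (w z) \<subseteq> (\<lambda>H. w ` H) ` separating y z"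
  proof
    fix H'
    assume H': "H' \<in> separating (w y) (w z)"
    obtain w' where w': "w' \<in> Wp Phi p" "w \<circ> w' = id" using Wp_inverse[OF w] by blast
    have H'_eq: "H' = w ` (w' ` H')" using w'(2) by (simp add: image_comp)
    have "w' ` H' \<in> separating y z"
      using H' Wp_image_hyperplanes[OF w'(1)] Wp_separates_iff[OF w, of "w' ` H'"] H'_eq
      unfolding separating_def by auto
    then show "H' \<in> (\<lambda>H. w ` H) ` separating y z" using H'_eq by blast
  qed
qed

lemma card_separating_Wp:
  assumes "w \<in> Wp Phi p"
  shows "card (separating (w y) (w z)) = card (separating y z)"
proof -
  have "inj (\<lambda>H. w ` H)" using inj_Wp[OF assms] by (simp add: inj_def inj_image_eq_iff)
  then show ?thesis unfolding Wp_separating[OF assms] by (simp add: card_image inj_on_subset)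
qed

lemma Wp_regular:
  assumes "w \<in> Wp Phi p" "regular y"
  shows "regular (w y)"
proof -
  obtain w' where w': "w' \<in> Wp Phi p" "w' \<circ> w = id" using Wp_inverse[OF assms(1)] by blast
  have "w y \<notin> H" if "H \<in> hyperplanes" for H
  proof
    assume "w y \<in> H"
    then have "y \<in> w' ` H" using w'(2) by (metis comp_apply id_apply image_eqI)
    then show False using assms(2) Wp_image_hyperplanes[OF w'(1) that] unfolding regular_def by blast
  qed
  then show ?thesis unfolding regular_def by blast
qed

section \<open>Walls of the fundamental alcove\<close>

text \<open>The alcove \<open>C\<close> translated by \<open>\<rho>\<close>; in these coordinates the dot action is the ordinary
  action of \<open>W\<^sub>p\<close>.\<close>

definition fund_alcove :: "'a set" where
  "fund_alcove = {y. \<forall>b\<in>Pos. 0 < cop y b \<and> cop y b < real p}"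

definition is_wall :: "'a \<Rightarrow> int \<Rightarrow> bool" where
  "is_wall a m \<longleftrightarrow> a \<in> Pos \<and> (\<exists>x. (\<forall>b\<in>Pos. 0 \<le> cop x b \<and> cop x b \<le> real p) \<and>
      cop x a = of_int m * real p \<and> (\<forall>b\<in>Pos - {a}. 0 < cop x b \<and> cop x b < real p))"

lemma fund_alcove_regular: "y \<in> fund_alcove \<Longrightarrow> regular y"
  unfolding regular_iff fund_alcove_def
  using between_multiples_not_multiple[of 0 "real p"] by auto

lemma separating_fund_alcove:
  assumes "y \<in> fund_alcove" "z \<in> fund_alcove"
  shows "separating y z = {}"
proof -
  have "H \<notin> separating y z" if "H \<in> hyperplanes" for H
  proof -
    obtain b k where b: "b \<in> Pos" "H = hyperplane b k" using \<open>H \<in> hyperplanes\<close> by (rule hyperplanesE)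
    then have "0 < (cop y b - of_int k * real p) * (cop z b - of_int k * real p)"
      using assms same_strip_mult_pos[of 0 "real p" "cop y b" "cop z b" k] unfolding fund_alcove_def by simp
    then show ?thesis using b hyperplane_in_separating_iff pos_root by simp
  qed
  then show ?thesis unfolding separating_def by blast
qed

lemma wall_level: "is_wall a m \<Longrightarrow> m = 0 \<or> m = 1"
proof -
  assume "is_wall a m"
  then obtain x where "0 \<le> cop x a" "cop x a \<le> real p" "cop x a = of_int m * real p"
    unfolding is_wall_def by blast
  then have "0 \<le> real_of_int m" "real_of_int m \<le> 1" using p_pos by (simp_all add: zero_le_mult_iff)
  then show "m = 0 \<or> m = 1" by linarith
qed

lemma separating_eq_if_separating_empty:
  assumes "regular y" "regular y'" "regular z" "regular z'"
    and "separating y y' = {}" "separating z z' = {}"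
  shows "separating y z = separating y' z'"
proof -
  have "H \<in> separating y z \<longleftrightarrow> H \<in> separating y' z'" for H
    using separating_triangle[OF assms(1,2,3), of H] separating_triangle[OF assms(2,3,4), of H]
      assms(5,6) separating_sym by blast
  then show ?thesis by blast
qed

lemma aff_refl_shift:
  assumes "a \<noteq> 0" "cop q a = of_int m * real p"
  shows "aff_refl p a m (q + \<delta> *\<^sub>R a) = q - \<delta> *\<^sub>R a"
proof -
  have "cop (q + \<delta> *\<^sub>R a) a = of_int m * real p + 2 * \<delta>"
    using assms by (simp add: cop_add cop_scaleR cop_self)
  then have "aff_refl p a m (q + \<delta> *\<^sub>R a) = q + \<delta> *\<^sub>R a - (2 * \<delta>) *\<^sub>R a"
    unfolding aff_refl_eq by simp
  also have "(2 * \<delta>) *\<^sub>R a = \<delta> *\<^sub>R a + \<delta> *\<^sub>R a" by (metis scaleR_2 scaleR_scaleR)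
  also have "q + \<delta> *\<^sub>R a - (\<delta> *\<^sub>R a + \<delta> *\<^sub>R a) = q - \<delta> *\<^sub>R a" by simp
  finally show ?thesis .
qed

lemma eventually_reflection_pair:
  assumes "\<forall>b\<in>Pos - {a}. \<forall>k. cop q b \<noteq> of_int k * real p"
  shows "\<forall>\<^sub>F \<delta> in at_right 0. 2 * \<delta> < real p \<and> (\<forall>b\<in>Pos - {a}. \<forall>k.
    0 < (cop (q + \<delta> *\<^sub>R a) b - of_int k * real p) * (cop (q - \<delta> *\<^sub>R a) b - of_int k * real p))"
proof -
  have "\<forall>\<^sub>F \<delta> in at_right 0. \<forall>k.
    0 < (cop (q + \<delta> *\<^sub>R a) b - of_int k * real p) * (cop (q - \<delta> *\<^sub>R a) b - of_int k * real p)"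
    if b: "b \<in> Pos - {a}" for b
  proof -
    obtain j :: int where j: "of_int j * real p < cop q b" "cop q b < (of_int j + 1) * real p"
      using strictly_between_multiples[of "real p" "cop q b"] assms b p_pos by auto
    have "\<forall>\<^sub>F \<delta> in at_right 0.
        (of_int j * real p < cop q b + \<delta> * cop a b \<and> cop q b + \<delta> * cop a b < (of_int j + 1) * real p) \<and>
        (of_int j * real p < cop q b + \<delta> * - cop a b \<and> cop q b + \<delta> * - cop a b < (of_int j + 1) * real p)"
      using j by (intro eventually_conj eventually_affine_between)
    then show ?thesis
      by (rule eventually_mono) (auto simp: cop_add cop_diff cop_scaleR intro!: same_strip_mult_pos[of j])
  qed
  then have "\<forall>\<^sub>F \<delta> in at_right 0. \<forall>b\<in>Pos - {a}. \<forall>k.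
    0 < (cop (q + \<delta> *\<^sub>R a) b - of_int k * real p) * (cop (q - \<delta> *\<^sub>R a) b - of_int k * real p)"
    using finite_Pos by (intro eventually_ball_finite) auto
  moreover have "\<forall>\<^sub>F \<delta> in at_right 0. 2 * \<delta> < real p"
    by (rule eventually_mono[OF eventually_affine_between[of "-1" 0 "real p" 2]]) (use p_pos in auto)
  ultimately show ?thesis by (simp add: eventually_conj_iff)
qed

lemma reflection_pair_products:
  assumes a: "a \<in> Pos" and q: "cop q a = of_int m * real p" and \<delta>: "0 < \<delta>" "2 * \<delta> < real p"
    and others: "\<forall>b\<in>Pos - {a}. \<forall>k.
      0 < (cop (q + \<delta> *\<^sub>R a) b - of_int k * real p) * (cop (q - \<delta> *\<^sub>R a) b - of_int k * real p)"
    and b: "b \<in> Pos"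
  shows "(cop (q + \<delta> *\<^sub>R a) b - of_int k * real p) * (cop (q - \<delta> *\<^sub>R a) b - of_int k * real p) < 0
      \<longleftrightarrow> b = a \<and> k = m"
    and "(cop (q + \<delta> *\<^sub>R a) b - of_int k * real p) * (cop (q - \<delta> *\<^sub>R a) b - of_int k * real p) \<noteq> 0"
proof -
  let ?P = "(cop (q + \<delta> *\<^sub>R a) b - of_int k * real p) * (cop (q - \<delta> *\<^sub>R a) b - of_int k * real p)"
  have "cop (q + \<delta> *\<^sub>R a) a = of_int m * real p + 2 * \<delta>" "cop (q - \<delta> *\<^sub>R a) a = of_int m * real p - 2 * \<delta>"
    using q pos_root_nonzero[OF a] by (simp_all add: cop_add cop_diff cop_scaleR cop_self)
  then have on_a: "b = a \<Longrightarrow> (?P < 0 \<longleftrightarrow> k = m) \<and> ?P \<noteq> 0"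
    using shifted_multiple_product[of "2 * \<delta>" "real p" m k] \<delta> by simp
  have off_a: "b \<noteq> a \<Longrightarrow> 0 < ?P" using others b by blast
  show "?P < 0 \<longleftrightarrow> b = a \<and> k = m"
  proof (cases "b = a")
    case False
    then show ?thesis using off_a by (metis less_asym)
  qed (use on_a in blast)
  show "?P \<noteq> 0"
  proof (cases "b = a")
    case False
    then show ?thesis using off_a by (metis less_irrefl)
  qed (use on_a in blast)
qed

lemma separating_reflection_pair:
  assumes a: "a \<in> Pos" and q: "cop q a = of_int m * real p" and \<delta>: "0 < \<delta>" "2 * \<delta> < real p"
    and others: "\<forall>b\<in>Pos - {a}. \<forall>k.
      0 < (cop (q + \<delta> *\<^sub>R a) b - of_int k * real p) * (cop (q - \<delta> *\<^sub>R a) b - of_int k * real p)"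
  defines "z \<equiv> q + \<delta> *\<^sub>R a"
  shows "regular z" "separating z (aff_refl p a m z) = {hyperplane a m}"
proof -
  note products = reflection_pair_products[OF a q \<delta> others]
  have rz: "aff_refl p a m z = q - \<delta> *\<^sub>R a"
    unfolding z_def using aff_refl_shift[OF pos_root_nonzero[OF a] q] .
  show "regular z" unfolding regular_iff
  proof (intro ballI allI notI)
    fix b k
    assume "b \<in> Pos" "cop z b = of_int k * real p"
    then show False using products(2)[of b k] unfolding z_def by simp
  qed
  show "separating z (aff_refl p a m z) = {hyperplane a m}"
  proof
    show "separating z (aff_refl p a m z) \<subseteq> {hyperplane a m}"
    proof
      fix H
      assume H: "H \<in> separating z (aff_refl p a m z)"
      then obtain b k where b: "b \<in> Pos" "H = hyperplane b k"
        unfolding separating_def by (auto elim: hyperplanesE)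
      then have "b = a \<and> k = m"
        using H products(1)[OF b(1)] hyperplane_in_separating_iff[OF pos_root[OF b(1)]]
        unfolding rz unfolding z_def by simp
      then show "H \<in> {hyperplane a m}" using b by simp
    qed
    show "{hyperplane a m} \<subseteq> separating z (aff_refl p a m z)"
      using products(1)[OF a] hyperplane_in_separating_iff[OF pos_root[OF a]]
      unfolding rz unfolding z_def by simp
  qed
qed

lemma pos_root_multiple:
  assumes "a \<in> Pos" "b \<in> Pos" "b = \<kappa> *\<^sub>R a"
  shows "b = a"
proof -
  have "\<kappa> = 1 \<or> \<kappa> = -1" using reduced pos_root assms by blast
  then show ?thesis using assms uminus_pos_root by auto
qed

lemma exists_normal_vector_avoiding_roots:
  assumes a: "a \<in> Pos"
  shows "\<exists>w. w \<bullet> a = 0 \<and> (\<forall>b\<in>Pos - {a}. w \<bullet> b \<noteq> 0)"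
proof -
  define proj where "proj b = b - ((b \<bullet> a) / (a \<bullet> a)) *\<^sub>R a" for b
  have a0: "a \<noteq> 0" using pos_root_nonzero a by blast
  have proj_a: "proj b \<bullet> a = 0" for b unfolding proj_def using a0 by (simp add: inner_diff_left)
  have "0 \<notin> proj ` (Pos - {a})"
  proof
    assume "0 \<in> proj ` (Pos - {a})"
    then obtain b where b: "b \<in> Pos - {a}" "0 = proj b" by (rule imageE)
    then have "b = ((b \<bullet> a) / (a \<bullet> a)) *\<^sub>R a" unfolding proj_def by simp
    then show False using pos_root_multiple a b(1) by blast
  qed
  moreover have "finite (proj ` (Pos - {a}))" using finite_Pos by simp
  ultimately obtain v where v: "\<forall>d\<in>proj ` (Pos - {a}). v \<bullet> d \<noteq> 0"
    using exists_nonorthogonal_vector by blast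
  have "proj v \<bullet> b = v \<bullet> proj b" for b
    unfolding proj_def by (simp add: inner_diff_left inner_diff_right inner_commute)
  then have "\<forall>b\<in>Pos - {a}. proj v \<bullet> b \<noteq> 0" using v by simp
  then show ?thesis using proj_a by blast
qed

lemma exists_generic_point_on_hyperplane:
  assumes a: "a \<in> Pos"
  shows "\<exists>q. cop q a = of_int m * real p \<and> (\<forall>b\<in>Pos - {a}. \<forall>k. cop q b \<noteq> of_int k * real p)"
proof -
  have a0: "a \<noteq> 0" using pos_root_nonzero a by blast
  obtain w where w: "w \<bullet> a = 0" "\<forall>b\<in>Pos - {a}. w \<bullet> b \<noteq> 0"
    using exists_normal_vector_avoiding_roots[OF a] by blast
  define q0 where "q0 = (of_int m * real p / 2) *\<^sub>R a"
  have "\<forall>b\<in>Pos - {a}. \<forall>\<^sub>F s in at_right 0. \<forall>k::int. cop q0 b + s * cop w b \<noteq> of_int k * real p"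
  proof
    fix b
    assume b: "b \<in> Pos - {a}"
    then have "cop w b \<noteq> 0" using w(2) pos_root_nonzero cop_eq_0_iff by auto
    then show "\<forall>\<^sub>F s in at_right 0. \<forall>k::int. cop q0 b + s * cop w b \<noteq> of_int k * real p"
      using p_pos by (intro eventually_affine_not_multiple) auto
  qed
  then have "\<forall>\<^sub>F s in at_right 0. \<forall>b\<in>Pos - {a}. \<forall>k::int. cop q0 b + s * cop w b \<noteq> of_int k * real p"
    using finite_Pos by (intro eventually_ball_finite) auto
  then obtain s where s: "\<forall>b\<in>Pos - {a}. \<forall>k::int. cop q0 b + s * cop w b \<noteq> of_int k * real p"
    using eventually_at_right_0_witness by blast
  have "cop (q0 + s *\<^sub>R w) a = of_int m * real p"
    unfolding q0_def using a0 w(1) by (simp add: cop_add cop_scaleR cop_self cop_eq_0_iff)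
  moreover have "cop (q0 + s *\<^sub>R w) b = cop q0 b + s * cop w b" for b by (simp add: cop_add cop_scaleR)
  ultimately show ?thesis using s by (intro exI[of _ "q0 + s *\<^sub>R w"]) simp
qed

lemma exists_reflection_pair:
  assumes a: "a \<in> Pos"
  shows "\<exists>z. regular z \<and> separating z (aff_refl p a m z) = {hyperplane a m}"
proof -
  obtain q where q: "cop q a = of_int m * real p" "\<forall>b\<in>Pos - {a}. \<forall>k. cop q b \<noteq> of_int k * real p"
    using exists_generic_point_on_hyperplane[OF a] by blast
  obtain \<delta> where "0 < \<delta>" "2 * \<delta> < real p" "\<forall>b\<in>Pos - {a}. \<forall>k.
      0 < (cop (q + \<delta> *\<^sub>R a) b - of_int k * real p) * (cop (q - \<delta> *\<^sub>R a) b - of_int k * real p)"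
    using eventually_at_right_0_witness[OF eventually_reflection_pair[OF q(2)]] by blast
  then show ?thesis using separating_reflection_pair[OF a q(1)] by blast
qed

lemma eventually_shift_in_strip:
  assumes "finite B" "\<forall>b\<in>B. 0 < cop x b \<and> cop x b < real p"
  shows "\<forall>\<^sub>F \<delta> in at_right 0. \<forall>b\<in>B. (0 < cop (x + \<delta> *\<^sub>R a) b \<and> cop (x + \<delta> *\<^sub>R a) b < real p)
    \<and> (0 < cop (x - \<delta> *\<^sub>R a) b \<and> cop (x - \<delta> *\<^sub>R a) b < real p)"
proof -
  have "\<forall>b\<in>B. \<forall>\<^sub>F \<delta> in at_right 0. (0 < cop x b + \<delta> * cop a b \<and> cop x b + \<delta> * cop a b < real p)
      \<and> (0 < cop x b + \<delta> * - cop a b \<and> cop x b + \<delta> * - cop a b < real p)"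
    using assms(2) by (intro ballI eventually_conj eventually_affine_between) auto
  then show ?thesis
    using assms(1) by (intro eventually_ball_finite) (auto simp: cop_add cop_diff cop_scaleR)
qed

lemma wall_reflection_pair_in_alcove:
  assumes "is_wall a m"
  shows "\<exists>u\<in>fund_alcove. separating u (aff_refl p a m u) = {hyperplane a m}"
proof -
  obtain x where a: "a \<in> Pos" and x_a: "cop x a = of_int m * real p"
    and x_b: "\<forall>b\<in>Pos - {a}. 0 < cop x b \<and> cop x b < real p"
    using assms unfolding is_wall_def by blast
  have a0: "a \<noteq> 0" using pos_root_nonzero a by blast
  have "\<forall>b\<in>Pos - {a}. \<forall>k. cop x b \<noteq> of_int k * real p"
    using x_b between_multiples_not_multiple[of 0 "real p"] by simp
  from eventually_at_right_0_witness[OF eventually_conj[OF eventually_reflection_pair[OF this]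
      eventually_shift_in_strip[of "Pos - {a}" x a]]]
  obtain \<delta> where \<delta>: "0 < \<delta>" "2 * \<delta> < real p" and others: "\<forall>b\<in>Pos - {a}. \<forall>k.
      0 < (cop (x + \<delta> *\<^sub>R a) b - of_int k * real p) * (cop (x - \<delta> *\<^sub>R a) b - of_int k * real p)"
    and strip: "\<forall>b\<in>Pos - {a}. (0 < cop (x + \<delta> *\<^sub>R a) b \<and> cop (x + \<delta> *\<^sub>R a) b < real p)
      \<and> (0 < cop (x - \<delta> *\<^sub>R a) b \<and> cop (x - \<delta> *\<^sub>R a) b < real p)"
    using finite_Pos x_b by blast
  define z where "z = x + \<delta> *\<^sub>R a"
  have rz: "aff_refl p a m z = x - \<delta> *\<^sub>R a" unfolding z_def by (rule aff_refl_shift[OF a0 x_a])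
  have sep: "separating z (aff_refl p a m z) = {hyperplane a m}"
    unfolding z_def by (rule separating_reflection_pair[OF a x_a \<delta> others])
  have m: "m = 0 \<or> m = 1" using wall_level[OF assms] .
  show ?thesis
  proof (cases "m = 0")
    case True
    then have "z \<in> fund_alcove"
      using strip \<delta> x_a a0 unfolding fund_alcove_def z_def by (auto simp: cop_add cop_scaleR cop_self)
    then show ?thesis using sep by blast
  next
    case False
    then have "aff_refl p a m z \<in> fund_alcove"
      using m strip \<delta> x_a a0 unfolding fund_alcove_def rz by (auto simp: cop_diff cop_scaleR cop_self)
    moreover have "separating (aff_refl p a m z) (aff_refl p a m (aff_refl p a m z)) = {hyperplane a m}"
      using sep separating_sym aff_refl_aff_refl[OF a0] by simp
    ultimately show ?thesis by blast
  qed
qed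

lemma separating_wall_reflection:
  assumes y: "y \<in> fund_alcove" and wall: "is_wall a m"
  shows "separating y (aff_refl p a m y) = {hyperplane a m}"
proof -
  let ?r = "aff_refl p a m"
  obtain u where u: "u \<in> fund_alcove" "separating u (?r u) = {hyperplane a m}"
    using wall_reflection_pair_in_alcove[OF wall] by blast
  have r: "?r \<in> Wp Phi p" using wall pos_root aff_refl_in_Wp unfolding is_wall_def by blast
  have "separating (?r y) (?r u) = {}"
    unfolding Wp_separating[OF r] using separating_fund_alcove[OF y u(1)] by simp
  then have "separating y (?r y) = separating u (?r u)"
    using separating_fund_alcove[OF y u(1)] fund_alcove_regular y u(1) Wp_regular[OF r]
    by (intro separating_eq_if_separating_empty) auto
  then show ?thesis using u(2) by simp
qed

text \<open>\<open>facet_fun (b, 0)\<close> and \<open>facet_fun (b, 1)\<close> are \<open>\<langle>x, b\<^sup>\<or>\<rangle>\<close> and \<open>p - \<langle>x, b\<^sup>\<or>\<rangle>\<close>, whose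
  nonnegativity cuts out the closure of the fundamental alcove.\<close>

definition facet_fun :: "'a \<times> int \<Rightarrow> 'a \<Rightarrow> real" where
  "facet_fun l x = (1 - 2 * of_int (snd l)) * (cop x (fst l) - of_int (snd l) * real p)"

definition facet_grad :: "'a \<times> int \<Rightarrow> 'a" where
  "facet_grad l = ((1 - 2 * of_int (snd l)) * (2 / (fst l \<bullet> fst l))) *\<^sub>R fst l"

lemma facet_fun_add: "facet_fun l (x + v) = facet_fun l x + facet_grad l \<bullet> v"
proof -
  have "facet_grad l \<bullet> v = (1 - 2 * of_int (snd l)) * cop v (fst l)"
    unfolding facet_grad_def cop_def by (simp add: inner_commute)
  then show ?thesis unfolding facet_fun_def cop_add by (simp add: algebra_simps)
qed

lemma facet_grads_distinct:
  assumes l: "l \<in> Pos \<times> {0, 1}" and l': "l' \<in> Pos \<times> {0, 1}" and "l \<noteq> l'"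
    and \<alpha>: "0 < \<alpha>" "0 < \<alpha>'"
  shows "\<alpha> *\<^sub>R facet_grad l' \<noteq> \<alpha>' *\<^sub>R facet_grad l"
proof
  obtain b m b' m' where lb: "l = (b, m)" "l' = (b', m')" by (cases l, cases l')
  define \<sigma> where "\<sigma> = 1 - 2 * real_of_int m"
  define \<sigma>' where "\<sigma>' = 1 - 2 * real_of_int m'"
  define c where "c = 2 / (b \<bullet> b)"
  define c' where "c' = 2 / (b' \<bullet> b')"
  have b: "b \<in> Pos" "b' \<in> Pos" and \<sigma>: "\<sigma> = 1 \<or> \<sigma> = -1" "\<sigma>' = 1 \<or> \<sigma>' = -1"
    using l l' unfolding lb \<sigma>_def \<sigma>'_def by auto
  have c: "0 < c" "0 < c'" unfolding c_def c'_def using b pos_root_nonzero by auto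
  assume "\<alpha> *\<^sub>R facet_grad l' = \<alpha>' *\<^sub>R facet_grad l"
  then have eq: "(\<alpha> * \<sigma>' * c') *\<^sub>R b' = (\<alpha>' * \<sigma> * c) *\<^sub>R b"
    unfolding facet_grad_def lb \<sigma>_def \<sigma>'_def c_def c'_def by (simp add: mult.assoc)
  have nz: "\<alpha> * \<sigma>' * c' \<noteq> 0" using \<alpha> \<sigma> c by auto
  have "b' = inverse (\<alpha> * \<sigma>' * c') *\<^sub>R ((\<alpha> * \<sigma>' * c') *\<^sub>R b')"
    by (simp only: scaleR_scaleR left_inverse[OF nz] scaleR_one)
  also have "\<dots> = ((\<alpha>' * \<sigma> * c) / (\<alpha> * \<sigma>' * c')) *\<^sub>R b"
    unfolding eq scaleR_scaleR by (simp add: divide_inverse mult.commute)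
  finally have bb: "b' = b" using pos_root_multiple b by blast
  then have "(\<alpha> * \<sigma>' * c) *\<^sub>R b = (\<alpha>' * \<sigma> * c) *\<^sub>R b" using eq c'_def c_def by simp
  then have "\<alpha> * \<sigma>' * c = \<alpha>' * \<sigma> * c" using pos_root_nonzero b by simp
  then have "\<sigma> = \<sigma>'" using \<sigma> \<alpha> c by (auto simp: mult_less_0_iff)
  then show False using \<open>l \<noteq> l'\<close> bb unfolding lb \<sigma>_def \<sigma>'_def by simp
qed

lemma facet_fun_fund_alcove:
  assumes "y \<in> fund_alcove" "l \<in> Pos \<times> {0, 1}"
  shows "0 < facet_fun l y"
  using assms unfolding fund_alcove_def facet_fun_def by auto

lemma exists_wall_separating:
  assumes y: "y \<in> fund_alcove" and z: "regular z" "z \<notin> fund_alcove"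
  shows "\<exists>a m. is_wall a m \<and> hyperplane a m \<in> separating y z"
proof -
  let ?L = "Pos \<times> {0, 1 :: int}"
  have fin: "finite ?L" using finite_Pos by simp
  have pos: "\<forall>l\<in>?L. 0 < facet_fun l y" using facet_fun_fund_alcove[OF y] by blast
  have nonzero: "\<forall>l\<in>?L. facet_fun l z \<noteq> 0"
    using z(1) unfolding regular_iff facet_fun_def by auto
  obtain l0 where l0: "l0 \<in> ?L" "facet_fun l0 z < 0"
  proof -
    obtain b where "b \<in> Pos" "\<not> (0 < cop z b \<and> cop z b < real p)"
      using z(2) unfolding fund_alcove_def by auto
    moreover have "cop z b \<noteq> 0" "cop z b \<noteq> real p"
      using z(1) \<open>b \<in> Pos\<close> unfolding regular_iff by (metis mult_zero_left of_int_0, metis mult_1 of_int_1)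
    ultimately show ?thesis using that[of "(b, 0)"] that[of "(b, 1)"] unfolding facet_fun_def by force
  qed
  have distinct: "\<forall>l\<in>?L. \<forall>l'\<in>?L. l \<noteq> l' \<longrightarrow> facet_fun l y *\<^sub>R facet_grad l' \<noteq> facet_fun l' y *\<^sub>R facet_grad l"
    using facet_grads_distinct pos by blast
  obtain i x where i: "i \<in> ?L" "facet_fun i z < 0" "facet_fun i x = 0"
    and x: "\<forall>l\<in>?L - {i}. 0 < facet_fun l x"
    using exists_separating_facet[OF facet_fun_add fin pos nonzero l0 distinct] by blast
  obtain a m where im: "i = (a, m)" "a \<in> Pos" "m = 0 \<or> m = 1" using i(1) by auto
  have "is_wall a m" unfolding is_wall_def
  proof (intro conjI exI[of _ x])
    show "cop x a = of_int m * real p" using i(3) im unfolding facet_fun_def by auto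
    have "0 \<le> facet_fun (b, 0) x" "0 \<le> facet_fun (b, 1) x" if "b \<in> Pos" for b
      using x i(3) im that by (metis DiffI insertCI less_eq_real_def mem_Sigma_iff singletonD)+
    then show "\<forall>b\<in>Pos. 0 \<le> cop x b \<and> cop x b \<le> real p" unfolding facet_fun_def by simp
    have "0 < facet_fun (b, 0) x" "0 < facet_fun (b, 1) x" if "b \<in> Pos - {a}" for b
      using x im that by auto
    then show "\<forall>b\<in>Pos - {a}. 0 < cop x b \<and> cop x b < real p" unfolding facet_fun_def by simp
  qed (use im in simp)
  moreover have "(cop y a - of_int m * real p) * (cop z a - of_int m * real p) < 0"
    using facet_fun_fund_alcove[OF y i(1)] i(2) im unfolding facet_fun_def
    by (auto simp: mult_less_0_iff zero_less_mult_iff)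
  then have "hyperplane a m \<in> separating y z"
    using hyperplane_in_separating_iff pos_root im(2) by blast
  ultimately show ?thesis by blast
qed

section \<open>Simple transitivity on alcoves\<close>

definition wall_reflections :: "('a \<Rightarrow> 'a) set" where
  "wall_reflections = {aff_refl p a m | a m. is_wall a m}"

lemma wall_root: "is_wall a m \<Longrightarrow> a \<in> Phi"
  unfolding is_wall_def using pos_root by blast

lemma wall_reflections_subset_Wp: "wall_reflections \<subseteq> Wp Phi p"
  unfolding wall_reflections_def using aff_refl_in_Wp wall_root by blast

lemma wall_reflection_involution: "s \<in> wall_reflections \<Longrightarrow> s \<circ> s = id"
  unfolding wall_reflections_def using aff_refl_comp_self root_nonzero wall_root by blast

lemma separating_wall_reflection_Diff:
  assumes y: "y \<in> fund_alcove" and wall: "is_wall a m" and z: "regular z"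
    and H: "hyperplane a m \<in> separating y z"
  shows "separating (aff_refl p a m y) z = separating y z - {hyperplane a m}"
proof -
  have "regular (aff_refl p a m y)"
    using Wp_regular fund_alcove_regular[OF y] aff_refl_in_Wp wall_root[OF wall] by blast
  then have "X \<in> separating (aff_refl p a m y) z \<longleftrightarrow>
      (X \<in> separating (aff_refl p a m y) y \<longleftrightarrow> X \<notin> separating y z)" for X
    using separating_triangle fund_alcove_regular[OF y] z by blast
  then show ?thesis using separating_wall_reflection[OF y wall] separating_sym H by auto
qed

lemma wall_group_transitive:
  assumes y: "y \<in> fund_alcove"
  shows "regular z \<Longrightarrow> \<exists>u\<in>gen_group wall_reflections. separating (u y) z = {}"
proof (induction "card (separating y z)" arbitrary: z rule: less_induct)
  case less
  show ?case
  proof (cases "separating y z = {}")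
    case True
    then show ?thesis using gen_group.gen_id[of wall_reflections] by (intro bexI[of _ id]) simp_all
  next
    case False
    then have "z \<notin> fund_alcove" using separating_fund_alcove[OF y] by blast
    then obtain a m where wall: "is_wall a m" and H: "hyperplane a m \<in> separating y z"
      using exists_wall_separating[OF y less.prems] by blast
    let ?s = "aff_refl p a m"
    have s: "?s \<in> Wp Phi p" "?s \<circ> ?s = id" "?s \<in> wall_reflections"
      using wall_reflections_subset_Wp wall_reflection_involution wall unfolding wall_reflections_def by blast+
    have ss: "?s (?s x) = x" for x using s(2) by (metis comp_apply id_apply)
    have "card (separating y (?s z)) = card (separating (?s y) z)"
      using card_separating_Wp[OF s(1), of "?s y" z] ss by simp
    also have "\<dots> < card (separating y z)"
      unfolding separating_wall_reflection_Diff[OF y wall less.prems H]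
      by (rule card_Diff1_less[OF finite_separating H])
    finally obtain u where u: "u \<in> gen_group wall_reflections" "separating (u y) (?s z) = {}"
      using less.hyps Wp_regular[OF s(1) less.prems] by blast
    have "separating ((?s \<circ> u) y) z = {}"
      using Wp_separating[OF s(1), of "u y" "?s z"] u(2) ss by simp
    moreover have "?s \<circ> u \<in> gen_group wall_reflections" using s(3) u(1) by (rule gen_group.gen_step)
    ultimately show ?thesis by blast
  qed
qed

lemma wall_group_inverse:
  "u \<in> gen_group wall_reflections \<Longrightarrow> \<exists>u'\<in>gen_group wall_reflections. u \<circ> u' = id \<and> u' \<circ> u = id"
  using gen_group_inverse wall_reflection_involution by blast

lemma wall_group_subset_Wp: "u \<in> gen_group wall_reflections \<Longrightarrow> u \<in> Wp Phi p"
  unfolding Wp_def by (erule gen_group_mono) (auto simp: wall_reflections_def dest: wall_root)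

text \<open>Conjugating by the wall group moves an alcove adjacent to the hyperplane of the reflection
  onto the fundamental alcove; the conjugated reflection then moves \<open>y\<close> across a single
  hyperplane, which must be a wall.\<close>

lemma aff_refl_in_wall_group:
  assumes y: "y \<in> fund_alcove" and b: "b \<in> Phi"
  shows "aff_refl p b k \<in> gen_group wall_reflections"
proof -
  obtain a m where a: "a \<in> Pos" and "hyperplane b k = hyperplane a m"
    and r_eq: "aff_refl p b k = aff_refl p a m"
    by (rule hyperplane_pos_root[OF b])
  let ?r = "aff_refl p a m"
  have r: "?r \<in> Wp Phi p" using aff_refl_in_Wp pos_root a by blast
  obtain z where z: "regular z" "separating z (?r z) = {hyperplane a m}"
    using exists_reflection_pair[OF a] by blast
  obtain u where u: "u \<in> gen_group wall_reflections" "separating (u y) z = {}"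
    using wall_group_transitive[OF y z(1)] by blast
  obtain u' where u': "u' \<in> gen_group wall_reflections" "u \<circ> u' = id" "u' \<circ> u = id"
    using wall_group_inverse[OF u(1)] by blast
  have uW: "u \<in> Wp Phi p" "u' \<in> Wp Phi p" using wall_group_subset_Wp u(1) u'(1) by blast+
  have reg: "regular (u y)" "regular (?r (u y))" "regular (?r z)"
    using Wp_regular fund_alcove_regular[OF y] z(1) uW r by blast+
  have "separating (?r (u y)) (?r z) = {}" unfolding Wp_separating[OF r] u(2) by simp
  then have "separating (u y) (?r (u y)) = {hyperplane a m}"
    using separating_eq_if_separating_empty[OF reg(1) z(1) reg(2,3)] u(2) z(2) by simp
  moreover have "u' (u y) = y" using u'(3) by (rule pointfree_idE)
  ultimately have sep: "separating y (u' (?r (u y))) = {u' ` hyperplane a m}"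
    using Wp_separating[OF uW(2), of "u y" "?r (u y)"] by simp
  then have "u' (?r (u y)) \<notin> fund_alcove" using separating_fund_alcove[OF y] by auto
  moreover have "regular (u' (?r (u y)))" using Wp_regular uW(2) reg(2) by blast
  ultimately obtain c k' where wall: "is_wall c k'" "hyperplane c k' \<in> separating y (u' (?r (u y)))"
    using exists_wall_separating[OF y] by blast
  then have "u' ` hyperplane a m = hyperplane c k'" using sep by simp
  then have conj: "u' \<circ> ?r = aff_refl p c k' \<circ> u'"
    using Wp_conj_hyperplane[OF uW(2) pos_root[OF a] wall_root[OF wall(1)]] by blast
  have "?r = (u \<circ> u') \<circ> ?r" using u'(2) by simp
  also have "\<dots> = u \<circ> (aff_refl p c k' \<circ> u')" by (simp only: comp_assoc conj)
  finally have "?r = u \<circ> (aff_refl p c k' \<circ> u')" .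
  moreover have "aff_refl p c k' \<in> wall_reflections" using wall(1) unfolding wall_reflections_def by blast
  then have "u \<circ> (aff_refl p c k' \<circ> u') \<in> gen_group wall_reflections"
    using u(1) u'(1) by (blast intro: gen_group_comp gen_group_gen)
  ultimately show ?thesis using r_eq by simp
qed

lemma Wp_subset_wall_group:
  assumes "y \<in> fund_alcove" "w \<in> Wp Phi p"
  shows "w \<in> gen_group wall_reflections"
  using assms(2)
proof (induction w rule: Wp_induct)
  case id
  show ?case by (rule gen_group.gen_id)
next
  case (step a m w)
  then show ?case using gen_group_comp aff_refl_in_wall_group[OF assms(1)] by blast
qed

lemma exists_recrossing:
  assumes reg: "\<And>j. regular (g j)" and H1: "H \<in> separating (g 0) (g 1)"
    and Hn: "H \<notin> separating (g 0) (g n)" and n: "1 \<le> n"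
  shows "\<exists>j. 1 \<le> j \<and> j < n \<and> H \<in> separating (g j) (g (Suc j))"
proof (rule ccontr)
  assume none: "\<not> ?thesis"
  have "H \<in> separating (g 0) (g j)" if "1 \<le> j" "j \<le> n" for j
    using that
  proof (induction j)
    case (Suc j)
    show ?case
    proof (cases "j = 0")
      case True
      then show ?thesis using H1 by simp
    next
      case False
      then have "H \<in> separating (g 0) (g j)" "H \<notin> separating (g j) (g (Suc j))"
        using Suc none by auto
      then show ?thesis using separating_triangle[OF reg[of 0] reg[of j] reg[of "Suc j"], of H] by simp
    qed
  qed simp
  then show False using Hn n by blast
qed

text \<open>The gallery \<open>y, s\<^sub>1 y, s\<^sub>1 s\<^sub>2 y, \<dots>\<close> crosses the wall of \<open>s\<^sub>1\<close> in its first step; if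
  it ends on the side of \<open>y\<close> it crosses that hyperplane again in some step \<open>j\<close>, and then the
  \<open>j\<close>-th letter is conjugate to \<open>s\<^sub>1\<close>, so both letters cancel.\<close>

lemma wall_word_recrossing:
  assumes y: "y \<in> fund_alcove" and ss: "set ss \<subseteq> wall_reflections" "ss = aff_refl p a m # rest"
    and wall: "is_wall a m" and not_sep: "hyperplane a m \<notin> separating y (prodl ss y)"
  shows "\<exists>j. 1 \<le> j \<and> j < length ss \<and>
    prodl (take j ss) \<circ> ss ! j = aff_refl p a m \<circ> prodl (take j ss)"
proof -
  define g where "g j = prodl (take j ss) y" for j
  have Q: "prodl (take j ss) \<in> Wp Phi p" for j
    using ss(1) wall_reflections_subset_Wp set_take_subset
    by (metis Wp_def order_trans prodl_in_gen_group wall_group_subset_Wp)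
  have step: "separating (g j) (g (Suc j)) = {prodl (take j ss) ` hyperplane a' m'}"
    if "j < length ss" "ss ! j = aff_refl p a' m'" "is_wall a' m'" for j a' m'
  proof -
    have "g (Suc j) = prodl (take j ss) (aff_refl p a' m' y)"
      using that unfolding g_def by (simp add: take_Suc_conv_app_nth prodl_append)
    then show ?thesis
      unfolding g_def using Wp_separating[OF Q] separating_wall_reflection[OF y that(3)] by simp
  qed
  have "1 \<le> length ss" "regular (g j)" for j
    using ss(2) Wp_regular[OF Q fund_alcove_regular[OF y]] unfolding g_def by auto
  moreover have "hyperplane a m \<in> separating (g 0) (g 1)" using step[of 0 a m] wall ss(2) unfolding g_def by simp
  moreover have "hyperplane a m \<notin> separating (g 0) (g (length ss))" using not_sep unfolding g_def by simp
  ultimately obtain j where j: "1 \<le> j" "j < length ss" "hyperplane a m \<in> separating (g j) (g (Suc j))"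
    using exists_recrossing[of g] by blast
  then obtain a' m' where s_j: "ss ! j = aff_refl p a' m'" "is_wall a' m'"
    using ss(1) nth_mem unfolding wall_reflections_def by blast
  then have "prodl (take j ss) ` hyperplane a' m' = hyperplane a m" using step[OF j(2) s_j] j(3) by simp
  then have "prodl (take j ss) \<circ> aff_refl p a' m' = aff_refl p a m \<circ> prodl (take j ss)"
    using Wp_conj_hyperplane[OF Q wall_root[OF s_j(2)] wall_root[OF wall]] by blast
  then show ?thesis using j s_j(1) by metis
qed

lemma wall_word_eq_id:
  assumes y: "y \<in> fund_alcove"
  shows "set ss \<subseteq> wall_reflections \<Longrightarrow> separating y (prodl ss y) = {} \<Longrightarrow> prodl ss = id"
proof (induction "length ss" arbitrary: ss rule: less_induct)
  case less
  show ?case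
  proof (cases ss)
    case (Cons s rest)
    then obtain a m where s: "s = aff_refl p a m" "is_wall a m"
      using less.prems(1) unfolding wall_reflections_def by auto
    obtain j where j: "1 \<le> j" "j < length ss"
      and conj: "prodl (take j ss) \<circ> ss ! j = s \<circ> prodl (take j ss)"
      using wall_word_recrossing[OF y less.prems(1) Cons[unfolded s(1)] s(2)] less.prems(2) s(1) by auto
    define P where "P = prodl (take (j - 1) rest)"
    have take_j: "prodl (take j ss) = s \<circ> P"
      using j(1) unfolding Cons P_def by (cases j) simp_all
    have ss_id: "s \<circ> s = id" using less.prems(1) Cons wall_reflection_involution by simp
    have "prodl (take (Suc j) ss) = prodl (take j ss) \<circ> ss ! j"
      using j(2) by (simp add: take_Suc_conv_app_nth prodl_append)
    also have "\<dots> = s \<circ> (s \<circ> P)" by (subst conj) (simp only: take_j)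
    also have "\<dots> = P" by (simp only: comp_assoc[symmetric] ss_id id_comp)
    finally have "prodl (take (Suc j) ss) = P" .
    then have eq: "prodl ss = prodl (take (j - 1) rest @ drop (Suc j) ss)"
      by (metis P_def append_take_drop_id prodl_append)
    have "set (take (j - 1) rest @ drop (Suc j) ss) \<subseteq> wall_reflections"
      using less.prems(1) Cons by (auto dest: in_set_takeD in_set_dropD)
    moreover have "length (take (j - 1) rest @ drop (Suc j) ss) < length ss"
      using j Cons by simp
    ultimately show ?thesis using less.hyps less.prems(2) eq by metis
  qed simp
qed

lemma Wp_eq_id_if_separating_empty:
  assumes y: "y \<in> fund_alcove" and w: "w \<in> Wp Phi p" and empty: "separating y (w y) = {}"
  shows "w = id"
proof -
  obtain ss where "set ss \<subseteq> wall_reflections" "w = prodl ss"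
    using gen_group_prodl Wp_subset_wall_group[OF y w] by blast
  then show ?thesis using wall_word_eq_id[OF y] empty by blast
qed

section \<open>Shortening by a wall reflection\<close>

lemma exists_shortening_wall:
  assumes y: "y \<in> fund_alcove" and w: "w \<in> Wp Phi p" and ne: "separating y (w y) \<noteq> {}"
  obtains a m c k where "is_wall a m" "c \<in> Pos" "w \<circ> aff_refl p a m = aff_refl p c k \<circ> w"
    "hyperplane c k \<in> separating y (w y)"
    "separating y (w (aff_refl p a m y)) = separating y (w y) - {hyperplane c k}"
proof -
  obtain w' where w': "w' \<in> Wp Phi p" "w \<circ> w' = id" "w' \<circ> w = id" using Wp_inverse[OF w] by blast
  have reg: "regular y" "regular (w y)" "regular (w' y)"
    using fund_alcove_regular[OF y] Wp_regular w w'(1) by blast+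
  have "separating y (w' y) = (\<lambda>H. w' ` H) ` separating (w y) y"
    using Wp_separating[OF w'(1), of "w y" y] pointfree_idE[OF w'(3)] by simp
  then have "separating y (w' y) \<noteq> {}" using ne separating_sym[of "w y" y] by auto
  then have "w' y \<notin> fund_alcove" using separating_fund_alcove[OF y] by blast
  then obtain a m where wall: "is_wall a m" and H: "hyperplane a m \<in> separating y (w' y)"
    using exists_wall_separating[OF y reg(3)] by blast
  obtain c k where c: "c \<in> Pos" "w ` hyperplane a m = hyperplane c k"
    by (rule Wp_image_hyperplane[OF w wall_root[OF wall]])
  have conj: "w \<circ> aff_refl p a m = aff_refl p c k \<circ> w"
    using Wp_conj_hyperplane[OF w wall_root[OF wall] pos_root[OF c(1)] c(2)] .
  have "hyperplane c k \<in> separating (w y) (w (w' y))"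
    using H c(2) unfolding Wp_separating[OF w] by blast
  then have Hc: "hyperplane c k \<in> separating y (w y)"
    using pointfree_idE[OF w'(2), of y] separating_sym[of "w y" y] by simp
  have sep1: "separating (w y) (w (aff_refl p a m y)) = {hyperplane c k}"
    unfolding Wp_separating[OF w] separating_wall_reflection[OF y wall] using c(2) by simp
  have "regular (w (aff_refl p a m y))"
    using Wp_regular[OF w Wp_regular[OF aff_refl_in_Wp[OF wall_root[OF wall]] reg(1)]] .
  then have "X \<in> separating y (w (aff_refl p a m y)) \<longleftrightarrow>
      (X \<in> separating y (w y) \<longleftrightarrow> X \<notin> separating (w y) (w (aff_refl p a m y)))" for X
    by (rule separating_triangle[OF reg(1,2)])
  then have "separating y (w (aff_refl p a m y)) = separating y (w y) - {hyperplane c k}"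
    using sep1 Hc by auto
  then show ?thesis by (rule that[OF wall c(1) conj Hc])
qed

lemma separating_subset_preserves_bounds:
  assumes y: "y \<in> fund_alcove" and z': "regular z'" and sub: "separating y z' \<subseteq> separating y z"
    and b: "b \<in> Pos"
  shows "0 \<le> cop z b \<Longrightarrow> 0 \<le> cop z' b" and "cop z b \<le> real p \<Longrightarrow> cop z' b \<le> real p"
proof -
  have y_b: "0 < cop y b" "cop y b < real p" using y b unfolding fund_alcove_def by auto
  have sep: "(cop y b - of_int k * real p) * (cop z' b - of_int k * real p) < 0 \<Longrightarrow>
      (cop y b - of_int k * real p) * (cop z b - of_int k * real p) < 0" for k
    using sub hyperplane_in_separating_iff[OF pos_root[OF b]] by blast
  show "0 \<le> cop z' b" if "0 \<le> cop z b"
  proof (rule ccontr)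
    assume "\<not> 0 \<le> cop z' b"
    then have "(cop y b - of_int 0 * real p) * (cop z' b - of_int 0 * real p) < 0"
      using y_b by (simp add: mult_pos_neg)
    then show False using sep[of 0] y_b that by (simp add: mult_less_0_iff)
  qed
  show "cop z' b \<le> real p" if "cop z b \<le> real p"
  proof (rule ccontr)
    assume "\<not> cop z' b \<le> real p"
    then have "(cop y b - of_int 1 * real p) * (cop z' b - of_int 1 * real p) < 0"
      using y_b by (simp add: mult_neg_pos)
    then show False using sep[of 1] y_b that by (simp add: mult_less_0_iff)
  qed
qed

lemma dominant_separating_level:
  assumes y: "y \<in> fund_alcove" and c: "c \<in> Pos" and H: "hyperplane c k \<in> separating y z"
    and dom: "0 \<le> cop z c"
  shows "1 \<le> k" "of_int k * real p < cop z c"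
proof -
  have y_c: "0 < cop y c" "cop y c < real p" using y c unfolding fund_alcove_def by auto
  have neg: "(cop y c - of_int k * real p) * (cop z c - of_int k * real p) < 0"
    using H hyperplane_in_separating_iff[OF pos_root[OF c]] by blast
  show k: "1 \<le> k"
  proof (rule ccontr)
    assume "\<not> 1 \<le> k"
    then have "of_int k * real p \<le> 0" by (simp add: mult_nonpos_nonneg)
    then show False using neg y_c dom by (auto simp: mult_less_0_iff)
  qed
  then have "1 * real p \<le> of_int k * real p" by (intro mult_right_mono) auto
  then have "cop y c - of_int k * real p < 0" using y_c by linarith
  then show "of_int k * real p < cop z c" using neg by (auto simp: mult_less_0_iff)
qed

end

section \<open>The weight lattice\<close>

lemma zspanI: "x = (\<Sum>b\<in>B. of_int (c b) *\<^sub>R b) \<Longrightarrow> x \<in> zspan B"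
  unfolding zspan_def by blast

lemma zspan_add:
  assumes "x \<in> zspan B" "y \<in> zspan B"
  shows "x + y \<in> zspan B"
proof -
  obtain c d where "x = (\<Sum>b\<in>B. of_int (c b) *\<^sub>R b)" "y = (\<Sum>b\<in>B. of_int (d b) *\<^sub>R b)"
    using assms unfolding zspan_def by blast
  then have "x + y = (\<Sum>b\<in>B. of_int (c b + d b) *\<^sub>R b)"
    by (simp add: sum.distrib[symmetric] scaleR_add_left)
  then show ?thesis by (rule zspanI)
qed

lemma zspan_scaleR:
  assumes "x \<in> zspan B"
  shows "of_int n *\<^sub>R x \<in> zspan B"
proof -
  obtain c where "x = (\<Sum>b\<in>B. of_int (c b) *\<^sub>R b)" using assms unfolding zspan_def by blast
  then have "of_int n *\<^sub>R x = (\<Sum>b\<in>B. of_int (n * c b) *\<^sub>R b)" by (simp add: scaleR_sum_right)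
  then show ?thesis by (rule zspanI)
qed

lemma zspan_diff: "x \<in> zspan B \<Longrightarrow> y \<in> zspan B \<Longrightarrow> x - y \<in> zspan B"
  using zspan_add[of x B "of_int (-1) *\<^sub>R y"] zspan_scaleR[of y B "-1"] by simp

lemma zspan_sum: "(\<And>i. i \<in> S \<Longrightarrow> f i \<in> zspan B) \<Longrightarrow> sum f S \<in> zspan B"
proof (induction S rule: infinite_finite_induct)
  case (insert x F)
  then show ?case by (simp add: zspan_add)
next
  case empty
  show ?case using zspanI[of 0 "\<lambda>_. 0" B] by simp
next
  case (infinite S)
  show ?case using zspanI[of 0 "\<lambda>_. 0" B] infinite by simp
qed

locale std_affine_weyl =
  fixes X Phi Pos Simp :: "'a::euclidean_space set" and p :: nat
  assumes std: "std_root_datum X Phi Pos Simp" and p_gt_0: "p > 0"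

sublocale std_affine_weyl \<subseteq> affine_root_system Phi Pos p
proof
  have "(\<forall>a\<in>Phi. \<forall>b\<in>Phi. refl a b \<in> Phi) \<and> (\<forall>a\<in>Phi. \<forall>c::real. c *\<^sub>R a \<in> Phi \<longrightarrow> c = 1 \<or> c = -1)
      \<and> Phi \<subseteq> X \<and> (\<forall>x\<in>X. \<forall>a\<in>Phi. cop x a \<in> \<int>)"
    using std unfolding std_root_datum_def by (elim conjE) (intro conjI)
  then show "refl a b \<in> Phi" "c *\<^sub>R a \<in> Phi \<Longrightarrow> c = 1 \<or> c = -1" "cop a b \<in> \<int>"
    if "a \<in> Phi" "b \<in> Phi" for a b c
    using that by blast+
  have "finite Phi \<and> 0 \<notin> Phi \<and> Pos \<subseteq> Phi \<and> Phi = Pos \<union> uminus ` Pos \<and> Pos \<inter> uminus ` Pos = {}"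
    using std unfolding std_root_datum_def by (elim conjE) (intro conjI)
  then show "finite Phi" "0 \<notin> Phi" "Pos \<subseteq> Phi" "Phi = Pos \<union> uminus ` Pos" "Pos \<inter> uminus ` Pos = {}"
    by blast+
  show "p > 0" by (rule p_gt_0)
qed

context std_affine_weyl
begin

lemma std_facts:
  "(\<exists>B. independent B \<and> span B = UNIV \<and> X = zspan B) \<and> Phi \<subseteq> X \<and> (\<forall>x\<in>X. \<forall>a\<in>Phi. cop x a \<in> \<int>) \<and>
   Simp \<subseteq> Pos \<and> independent Simp \<and> (\<forall>a\<in>Pos. \<exists>c::'a \<Rightarrow> nat. a = (\<Sum>b\<in>Simp. of_nat (c b) *\<^sub>R b)) \<and>
   (\<forall>a\<in>Simp. \<exists>x\<in>X. \<forall>b\<in>Simp. cop x b = (if b = a then 1 else 0))"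
  using std unfolding std_root_datum_def by (elim conjE) (intro conjI)

lemma X_zspan: "\<exists>B. X = zspan B"
  using std_facts by blast

lemma roots_in_X: "Phi \<subseteq> X"
  using std_facts by blast

lemma cop_X_int: "x \<in> X \<Longrightarrow> a \<in> Phi \<Longrightarrow> cop x a \<in> \<int>"
  using std_facts by blast

lemma simple_roots: "Simp \<subseteq> Pos" "independent Simp"
  using std_facts by blast+

lemma finite_Simp: "finite Simp"
  using simple_roots(2) independent_bound_general by blast

lemma pos_root_decomp: "a \<in> Pos \<Longrightarrow> \<exists>c::'a \<Rightarrow> nat. a = (\<Sum>b\<in>Simp. of_nat (c b) *\<^sub>R b)"
  using std_facts by blast

lemma fundamental_weights: "\<forall>a\<in>Simp. \<exists>x\<in>X. \<forall>b\<in>Simp. cop x b = (if b = a then 1 else 0)"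
  using std_facts by blast

lemma X_diff: "x \<in> X \<Longrightarrow> y \<in> X \<Longrightarrow> x - y \<in> X"
  using X_zspan zspan_diff by blast

lemma X_scaleR: "x \<in> X \<Longrightarrow> of_int n *\<^sub>R x \<in> X"
  using X_zspan zspan_scaleR by blast

lemma X_sum: "(\<And>i. i \<in> S \<Longrightarrow> f i \<in> X) \<Longrightarrow> sum f S \<in> X"
  using X_zspan zspan_sum by metis

lemma simple_coeff_eq_0:
  assumes "(\<Sum>b\<in>Simp. u b *\<^sub>R b) = 0" "b \<in> Simp"
  shows "u b = 0"
  using simple_roots(2) assms unfolding independent_explicit by blast

lemma pos_root_other_simple_coeff:
  assumes "\<alpha> \<in> Simp" "\<beta> \<in> Pos" "\<beta> \<noteq> \<alpha>" "\<beta> = (\<Sum>b\<in>Simp. of_nat (c b) *\<^sub>R b)"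
  shows "\<exists>\<gamma>\<in>Simp. \<gamma> \<noteq> \<alpha> \<and> 0 < c \<gamma>"
proof (rule ccontr)
  assume "\<not> ?thesis"
  then have "\<beta> = (\<Sum>b\<in>Simp. (if b = \<alpha> then of_nat (c \<alpha>) else 0) *\<^sub>R b)"
    unfolding assms(4) by (intro sum.cong) auto
  also have "\<dots> = of_nat (c \<alpha>) *\<^sub>R \<alpha>"
    using finite_Simp assms(1) by (simp add: if_distrib[of "\<lambda>x. x *\<^sub>R _"] sum.delta' cong: if_cong)
  finally have "\<beta> = \<alpha>" using pos_root_multiple assms(1,2) simple_roots(1) by blast
  then show False using assms(3) by simp
qed

lemma simple_refl_pos_root:
  assumes \<alpha>: "\<alpha> \<in> Simp" and \<beta>: "\<beta> \<in> Pos" "\<beta> \<noteq> \<alpha>"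
  shows "refl \<alpha> \<beta> \<in> Pos - {\<alpha>}"
proof -
  have \<alpha>_pos: "\<alpha> \<in> Pos" using \<alpha> simple_roots(1) by blast
  obtain c where c: "\<beta> = (\<Sum>b\<in>Simp. of_nat (c b) *\<^sub>R b)" using pos_root_decomp[OF \<beta>(1)] by blast
  obtain \<gamma> where \<gamma>: "\<gamma> \<in> Simp" "\<gamma> \<noteq> \<alpha>" "0 < c \<gamma>"
    using pos_root_other_simple_coeff[OF \<alpha> \<beta> c] by blast
  have "refl \<alpha> \<beta> \<in> Pos"
  proof (rule ccontr)
    assume "refl \<alpha> \<beta> \<notin> Pos"
    then have "- refl \<alpha> \<beta> \<in> Pos" using root_cases refl_closed pos_root \<alpha>_pos \<beta>(1) by blast
    then obtain d where d: "- refl \<alpha> \<beta> = (\<Sum>b\<in>Simp. of_nat (d b) *\<^sub>R b)" using pos_root_decomp by blast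
    have "(\<Sum>b\<in>Simp. (of_nat (c b) + of_nat (d b) - (if b = \<alpha> then cop \<beta> \<alpha> else 0)) *\<^sub>R b)
        = (\<Sum>b\<in>Simp. of_nat (c b) *\<^sub>R b) + (\<Sum>b\<in>Simp. of_nat (d b) *\<^sub>R b) - cop \<beta> \<alpha> *\<^sub>R \<alpha>"
      using finite_Simp \<alpha>
      by (simp add: scaleR_add_left scaleR_diff_left sum.distrib sum_subtractf if_distrib[of "\<lambda>x. x *\<^sub>R _"]
          sum.delta' cong: if_cong)
    also have "\<dots> = \<beta> + (- refl \<alpha> \<beta>) - cop \<beta> \<alpha> *\<^sub>R \<alpha>" unfolding c[symmetric] d[symmetric] ..
    also have "\<dots> = 0" unfolding refl_def by simp
    finally have "real (c \<gamma>) + real (d \<gamma>) = 0" using simple_coeff_eq_0[OF _ \<gamma>(1)] \<gamma>(2) by fastforce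
    then show False using \<gamma>(3) by simp
  qed
  moreover have "refl \<alpha> \<beta> \<noteq> \<alpha>"
  proof
    assume "refl \<alpha> \<beta> = \<alpha>"
    then have "\<beta> = - \<alpha>" using refl_refl refl_self pos_root_nonzero[OF \<alpha>_pos] by metis
    then show False using uminus_pos_root \<alpha>_pos \<beta>(1) by blast
  qed
  ultimately show ?thesis by blast
qed

lemma cop_rho_simple:
  assumes \<alpha>: "\<alpha> \<in> Simp"
  shows "cop (rho Pos) \<alpha> = 1"
proof -
  have \<alpha>_pos: "\<alpha> \<in> Pos" using \<alpha> simple_roots(1) by blast
  have \<alpha>0: "\<alpha> \<noteq> 0" using pos_root_nonzero \<alpha>_pos by blast
  define P where "P = Pos - {\<alpha>}"
  have into: "refl \<alpha> x \<in> P" if "x \<in> P" for x using simple_refl_pos_root[OF \<alpha>] that unfolding P_def by blast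
  have img: "refl \<alpha> ` P = P"
  proof
    show "refl \<alpha> ` P \<subseteq> P" using into by blast
    show "P \<subseteq> refl \<alpha> ` P"
    proof
      fix x
      assume "x \<in> P"
      then show "x \<in> refl \<alpha> ` P" using into refl_refl[OF \<alpha>0] by (intro image_eqI[of _ _ "refl \<alpha> x"]) auto
    qed
  qed
  have "inj_on (refl \<alpha>) P" by (rule inj_on_inverseI[of _ "refl \<alpha>"]) (simp add: refl_refl[OF \<alpha>0])
  then have sum_P: "(\<Sum>x\<in>P. refl \<alpha> x) = (\<Sum>x\<in>P. x)" using sum.reindex[of "refl \<alpha>" P "\<lambda>x. x"] img by simp
  have sum_Pos: "(\<Sum>x\<in>Pos. x) = \<alpha> + (\<Sum>x\<in>P. x)"
    unfolding P_def using sum.remove[OF finite_Pos \<alpha>_pos] .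
  have "(\<Sum>x\<in>Pos. x) - cop (\<Sum>x\<in>Pos. x) \<alpha> *\<^sub>R \<alpha> = - \<alpha> + (\<Sum>x\<in>P. x)"
    using sum_P unfolding refl_def[symmetric] sum_Pos refl_add refl_sum refl_self[OF \<alpha>0] by simp
  then have "(cop (\<Sum>x\<in>Pos. x) \<alpha> - 2) *\<^sub>R \<alpha> = 0" unfolding sum_Pos by (simp add: algebra_simps scaleR_2)
  then have "cop (\<Sum>x\<in>Pos. x) \<alpha> = 2" using \<alpha>0 by simp
  then show ?thesis unfolding rho_def cop_scaleR by simp
qed

lemma exists_weight_one_on_simple: "\<exists>\<rho>'\<in>X. \<forall>b\<in>Simp. cop \<rho>' b = 1"
proof -
  obtain \<omega> where \<omega>: "\<And>a. a \<in> Simp \<Longrightarrow> \<omega> a \<in> X \<and> (\<forall>b\<in>Simp. cop (\<omega> a) b = (if b = a then 1 else 0))"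
    using bchoice[OF fundamental_weights[unfolded Bex_def]] by blast
  have "cop (\<Sum>a\<in>Simp. \<omega> a) b = 1" if "b \<in> Simp" for b
  proof -
    have "cop (\<Sum>a\<in>Simp. \<omega> a) b = (\<Sum>a\<in>Simp. if b = a then 1 else 0)"
      unfolding cop_sum using \<omega> that by (intro sum.cong) auto
    also have "\<dots> = 1" using finite_Simp that by simp
    finally show ?thesis .
  qed
  moreover have "(\<Sum>a\<in>Simp. \<omega> a) \<in> X" by (rule X_sum) (use \<omega> in blast)
  ultimately show ?thesis by blast
qed

text \<open>\<open>\<rho>\<close> differs from the sum of the fundamental weights by a vector orthogonal to all roots.\<close>

lemma cop_rho_int:
  assumes a: "a \<in> Phi"
  shows "cop (rho Pos) a \<in> \<int>"
proof -
  obtain \<rho>' where \<rho>': "\<rho>' \<in> X" "\<forall>b\<in>Simp. cop \<rho>' b = 1" using exists_weight_one_on_simple by blast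
  define \<delta> where "\<delta> = rho Pos - \<rho>'"
  have simple: "\<delta> \<bullet> b = 0" if "b \<in> Simp" for b
  proof -
    have "cop \<delta> b = 0" unfolding \<delta>_def cop_diff using cop_rho_simple[OF that] \<rho>'(2) that by simp
    then show ?thesis using cop_eq_0_iff pos_root_nonzero simple_roots(1) that by blast
  qed
  have pos: "\<delta> \<bullet> b = 0" if b: "b \<in> Pos" for b
  proof -
    obtain c where "b = (\<Sum>e\<in>Simp. of_nat (c e) *\<^sub>R e)" using pos_root_decomp[OF b] by blast
    then show ?thesis using simple by (simp add: inner_sum_right)
  qed
  have "\<delta> \<bullet> a = 0"
  proof (cases "a \<in> Pos")
    case False
    then have "\<delta> \<bullet> (- a) = 0" using root_cases[OF a] pos by blast
    then show ?thesis by simp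
  qed (rule pos)
  then have "cop (rho Pos) a = cop \<rho>' a"
    using cop_eq_0_iff[OF root_nonzero[OF a], of \<delta>] unfolding \<delta>_def cop_diff by simp
  then show ?thesis using cop_X_int[OF \<rho>'(1) a] by simp
qed

lemma dot_Wp_in_X:
  assumes lam: "lam \<in> X"
  shows "w \<in> Wp Phi p \<Longrightarrow> dot Pos w lam \<in> X"
proof (induction w rule: Wp_induct)
  case id
  then show ?case using lam by (simp add: dot_def)
next
  case (step a m w)
  define \<nu> where "\<nu> = dot Pos w lam"
  have "cop \<nu> a + cop (rho Pos) a - of_int m * real p \<in> \<int>"
    using cop_X_int[OF step(3)[folded \<nu>_def] step(1)] cop_rho_int[OF step(1)] by (intro Ints_diff Ints_add) auto
  then obtain n where n: "cop \<nu> a + cop (rho Pos) a - of_int m * real p = of_int n" by (elim Ints_cases)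
  have eq: "dot Pos (aff_refl p a m \<circ> w) lam = \<nu> - of_int n *\<^sub>R a"
    unfolding \<nu>_def dot_def by (simp add: aff_refl_eq cop_add cop_diff n[unfolded \<nu>_def dot_def, symmetric])
  have "\<nu> - of_int n *\<^sub>R a \<in> X" using X_diff[OF step(3)[folded \<nu>_def] X_scaleR] roots_in_X step(1) by blast
  then show ?case unfolding eq .
qed

lemma root_in_zspan_if_aff_refl_in_WIp:
  assumes I: "I \<subseteq> Simp" and \<gamma>: "\<gamma> \<in> Pos" and W: "aff_refl p \<gamma> k \<in> WIp I p"
  shows "\<gamma> \<in> zspan I"
proof -
  have \<gamma>0: "\<gamma> \<noteq> 0" using pos_root_nonzero \<gamma> by blast
  define y where "y = (of_int k * real p / 2) *\<^sub>R \<gamma> - \<gamma>"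
  have "cop y \<gamma> = of_int k * real p - 2" unfolding y_def
    by (simp only: cop_diff cop_scaleR cop_self[OF \<gamma>0])
  then have "aff_refl p \<gamma> k y - y = 2 *\<^sub>R \<gamma>" unfolding aff_refl_eq by simp
  then have "(1 / 2) *\<^sub>R (2 *\<^sub>R \<gamma>) \<in> span I" using WIp_displacement_in_span[OF W] span_scale by metis
  then have "\<gamma> \<in> span I" by simp
  then obtain e where e: "\<gamma> = (\<Sum>b\<in>I. e b *\<^sub>R b)"
    using span_finite finite_subset[OF I finite_Simp] by auto
  obtain c where c: "\<gamma> = (\<Sum>b\<in>Simp. of_nat (c b) *\<^sub>R b)" using pos_root_decomp[OF \<gamma>] by blast
  have "(\<Sum>b\<in>Simp. (of_nat (c b) - (if b \<in> I then e b else 0)) *\<^sub>R b) = 0"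
    using I finite_Simp
    by (simp add: scaleR_diff_left sum_subtractf c[symmetric] if_distrib[of "\<lambda>x. x *\<^sub>R _"] sum.If_cases
        Int_absorb1 e[symmetric] cong: if_cong)
  then have "c b = 0" if "b \<in> Simp - I" for b using simple_coeff_eq_0 that by fastforce
  then have "(\<Sum>b\<in>Simp. of_nat (c b) *\<^sub>R b) = (\<Sum>b\<in>I. of_nat (c b) *\<^sub>R b)"
    by (intro sum.mono_neutral_right[OF finite_Simp I]) auto
  then have "\<gamma> = (\<Sum>b\<in>I. of_int (int (c b)) *\<^sub>R b)" using c by simp
  then show ?thesis by (rule zspanI)
qed

lemma wall_in_Sp:
  assumes "is_wall a m"
  shows "aff_refl p a m \<in> Sp Pos p"
proof -
  obtain x where x: "\<forall>b\<in>Pos. 0 \<le> cop x b \<and> cop x b \<le> real p" "cop x a = of_int m * real p"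
    "\<forall>b\<in>Pos - {a}. 0 < cop x b \<and> cop x b < real p" and a: "a \<in> Pos"
    using assms unfolding is_wall_def by blast
  have "x - rho Pos \<in> alcove_cl Pos p" unfolding alcove_cl_def using x(1) by simp
  then have "\<exists>x\<in>alcove_cl Pos p. cop (x + rho Pos) a = of_int m * real p \<and>
      (\<forall>b\<in>Pos. b \<noteq> a \<longrightarrow> 0 < cop (x + rho Pos) b \<and> cop (x + rho Pos) b < real p)"
    using x(2,3) by (intro bexI[of _ "x - rho Pos"]) auto
  then show ?thesis unfolding Sp_def using a by blast
qed

section \<open>Ascending words\<close>

lemma prec_dot_aff_refl:
  assumes \<nu>: "\<nu> \<in> X" and c: "c \<in> Pos" and k: "of_int k * real p < cop (\<nu> + rho Pos) c"
  shows "prec X Pos p (dot Pos (aff_refl p c k) \<nu>) \<nu>"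
proof -
  have "linkage_step X Pos p (dot Pos (aff_refl p c k) \<nu>) \<nu>"
    unfolding linkage_step_def using assms by (intro conjI exI[of _ c] exI[of _ k]) auto
  moreover have "dot Pos (aff_refl p c k) \<nu> \<noteq> \<nu>"
  proof
    assume "dot Pos (aff_refl p c k) \<nu> = \<nu>"
    then have "aff_refl p c k (\<nu> + rho Pos) = \<nu> + rho Pos" unfolding dot_def by (simp add: diff_eq_eq)
    then show False using aff_refl_fixed_iff[OF pos_root_nonzero[OF c]] k by simp
  qed
  ultimately show ?thesis unfolding prec_def preceq_def by blast
qed

lemma aff_refl_notin_WIp:
  assumes I: "I \<subseteq> Simp" and c: "c \<in> Pos" and k: "1 \<le> k" "of_int k * real p < cop z c"
    and bound: "\<forall>\<beta>\<in>Pos \<inter> zspan I. cop z \<beta> \<le> real p"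
  shows "aff_refl p c k \<notin> WIp I p"
proof
  assume "aff_refl p c k \<in> WIp I p"
  then have "cop z c \<le> real p" using root_in_zspan_if_aff_refl_in_WIp[OF I c] bound c by blast
  moreover have "1 * real p \<le> of_int k * real p" using k(1) by (intro mult_right_mono) auto
  ultimately show False using k(2) by simp
qed

definition ascending_word :: "'a set \<Rightarrow> 'a \<Rightarrow> ('a \<Rightarrow> 'a) list \<Rightarrow> bool" where
  "ascending_word I lam ss \<longleftrightarrow> set ss \<subseteq> Sp Pos p \<and>
    (\<forall>i < length ss. prec X Pos p (dot Pos (prodl (take i ss)) lam) (dot Pos (prodl (take (Suc i) ss)) lam)) \<and>
    (\<forall>i \<in> {1..length ss}. prodl (take i ss) \<circ> prodl (rev (take (i - 1) ss)) \<notin> WIp I p)"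

lemma ascending_word_snoc:
  assumes "ascending_word I lam ss" "s \<in> Sp Pos p"
    and "prec X Pos p (dot Pos (prodl ss) lam) (dot Pos (prodl ss \<circ> s) lam)"
    and "prodl ss \<circ> s \<circ> prodl (rev ss) \<notin> WIp I p"
  shows "ascending_word I lam (ss @ [s])"
proof -
  have "prodl (take i (ss @ [s])) \<circ> prodl (rev (take (i - 1) (ss @ [s]))) \<notin> WIp I p"
    if i: "i \<in> {1..length (ss @ [s])}" for i
  proof (cases "i \<le> length ss")
    case True
    then show ?thesis using assms(1) i unfolding ascending_word_def by auto
  next
    case False
    then have "i = Suc (length ss)" using i by simp
    then show ?thesis using assms(4) by (simp add: prodl_append)
  qed
  moreover have "\<forall>i < length (ss @ [s]).
      prec X Pos p (dot Pos (prodl (take i (ss @ [s]))) lam) (dot Pos (prodl (take (Suc i) (ss @ [s]))) lam)"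
    using prefixwise_snoc[where P = "\<lambda>u v. prec X Pos p (dot Pos (prodl u) lam) (dot Pos (prodl v) lam)"]
      assms(1,3) unfolding ascending_word_def by (simp add: prodl_append)
  ultimately show ?thesis using assms(1,2) unfolding ascending_word_def by simp
qed

lemma Sp_involution: "s \<in> Sp Pos p \<Longrightarrow> s \<circ> s = id"
  unfolding Sp_def using aff_refl_comp_self pos_root_nonzero by blast

lemma dot_plus_rho: "dot Pos w lam + rho Pos = w (lam + rho Pos)"
  unfolding dot_def by simp

lemma WIlam_dominant_mono:
  assumes y: "lam + rho Pos \<in> fund_alcove" and lam: "lam \<in> X"
    and w: "w \<in> WIlam Phi Pos I p lam" "dot Pos w lam \<in> dominant X Pos" and w': "w' \<in> Wp Phi p"
    and sub: "separating (lam + rho Pos) (w' (lam + rho Pos)) \<subseteq> separating (lam + rho Pos) (w (lam + rho Pos))"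
  shows "w' \<in> WIlam Phi Pos I p lam" "dot Pos w' lam \<in> dominant X Pos"
proof -
  have reg: "regular (w' (lam + rho Pos))" using Wp_regular[OF w' fund_alcove_regular[OF y]] .
  note bounds = separating_subset_preserves_bounds[OF y reg sub]
  have "\<forall>b\<in>Pos. 0 \<le> cop (w (lam + rho Pos)) b"
    using w(2) unfolding dominant_def mem_Collect_eq dot_plus_rho by blast
  then show "dot Pos w' lam \<in> dominant X Pos"
    using bounds(1) dot_Wp_in_X[OF lam w'] unfolding dominant_def mem_Collect_eq dot_plus_rho by blast
  have "\<forall>b\<in>Pos \<inter> zspan I. 0 \<le> cop (w (lam + rho Pos)) b \<and> cop (w (lam + rho Pos)) b \<le> real p"
    using w(1) unfolding WIlam_def CI_def mem_Collect_eq dot_plus_rho by blast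
  then show "w' \<in> WIlam Phi Pos I p lam"
    using bounds w' unfolding WIlam_def CI_def mem_Collect_eq dot_plus_rho by blast
qed

lemma ascending_word_extend:
  assumes y: "lam + rho Pos \<in> fund_alcove" and lam: "lam \<in> X" and I: "I \<subseteq> Simp"
    and w: "w \<in> WIlam Phi Pos I p lam" "dot Pos w lam \<in> dominant X Pos"
    and wall: "is_wall a m" and c: "c \<in> Pos" and conj: "w \<circ> aff_refl p a m = aff_refl p c k \<circ> w"
    and H: "hyperplane c k \<in> separating (lam + rho Pos) (w (lam + rho Pos))"
    and ss: "prodl ss = w \<circ> aff_refl p a m" "ascending_word I lam ss"
  shows "prodl (ss @ [aff_refl p a m]) = w" "ascending_word I lam (ss @ [aff_refl p a m])"
proof -
  let ?s = "aff_refl p a m" and ?s' = "aff_refl p c k"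
  have s: "?s \<in> Sp Pos p" "?s \<circ> ?s = id" using wall_in_Sp[OF wall] Sp_involution by blast+
  have W: "w \<in> Wp Phi p" using w(1) unfolding WIlam_def by blast
  show w_eq: "prodl (ss @ [?s]) = w" using ss(1) s(2) by (simp add: prodl_append comp_assoc)
  have "0 \<le> cop (w (lam + rho Pos)) c" using w(2) c unfolding dominant_def mem_Collect_eq dot_plus_rho by blast
  note level = dominant_separating_level[OF y c H this]
  have "dot Pos (prodl ss) lam = dot Pos ?s' (dot Pos w lam)"
    unfolding ss(1) conj by (simp add: dot_def)
  then have "prec X Pos p (dot Pos (prodl ss) lam) (dot Pos (prodl ss \<circ> ?s) lam)"
    using prec_dot_aff_refl[OF dot_Wp_in_X[OF lam W] c] level(2) w_eq
    by (simp add: dot_plus_rho prodl_append)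
  moreover have "prodl ss \<circ> ?s \<circ> prodl (rev ss) = ?s'"
  proof -
    have inv: "prodl ss \<circ> prodl (rev ss) = id"
      using ss(2) Sp_involution unfolding ascending_word_def by (intro prodl_rev_involutions) blast
    have "prodl ss \<circ> ?s \<circ> prodl (rev ss) = ?s' \<circ> (w \<circ> ?s) \<circ> prodl (rev ss)"
      using w_eq conj ss(1) by (simp add: prodl_append comp_assoc)
    also have "\<dots> = ?s'" using inv ss(1) by (simp add: comp_assoc)
    finally show ?thesis .
  qed
  moreover have "\<forall>\<beta>\<in>Pos \<inter> zspan I. cop (w (lam + rho Pos)) \<beta> \<le> real p"
    using w(1) unfolding WIlam_def CI_def mem_Collect_eq dot_plus_rho by blast
  then have "?s' \<notin> WIp I p" using aff_refl_notin_WIp[OF I c level] by blast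
  ultimately show "ascending_word I lam (ss @ [?s])"
    using ascending_word_snoc[OF ss(2) s(1)] by simp
qed

lemma exists_ascending_word:
  assumes y: "lam + rho Pos \<in> fund_alcove" and lam: "lam \<in> X" and I: "I \<subseteq> Simp"
  shows "w \<in> WIlam Phi Pos I p lam \<Longrightarrow> dot Pos w lam \<in> dominant X Pos \<Longrightarrow>
    \<exists>ss. prodl ss = w \<and> ascending_word I lam ss"
proof (induction "card (separating (lam + rho Pos) (w (lam + rho Pos)))" arbitrary: w rule: less_induct)
  case less
  let ?y = "lam + rho Pos"
  have W: "w \<in> Wp Phi p" using less.prems(1) unfolding WIlam_def by blast
  show ?case
  proof (cases "separating ?y (w ?y) = {}")
    case True
    then have "w = id" by (rule Wp_eq_id_if_separating_empty[OF y W])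
    then show ?thesis by (intro exI[of _ "[]"]) (simp add: ascending_word_def)
  next
    case False
    then obtain a m c k where wall: "is_wall a m" "c \<in> Pos" "w \<circ> aff_refl p a m = aff_refl p c k \<circ> w"
      "hyperplane c k \<in> separating ?y (w ?y)"
      and shorter: "separating ?y (w (aff_refl p a m ?y)) = separating ?y (w ?y) - {hyperplane c k}"
      by (rule exists_shortening_wall[OF y W])
    let ?w = "w \<circ> aff_refl p a m"
    have "?w \<in> Wp Phi p" using Wp_comp W aff_refl_in_Wp wall_root wall(1) by blast
    then have "?w \<in> WIlam Phi Pos I p lam" "dot Pos ?w lam \<in> dominant X Pos"
      using WIlam_dominant_mono[OF y lam less.prems] shorter by auto
    moreover have "card (separating ?y (?w ?y)) < card (separating ?y (w ?y))"
      using shorter card_Diff1_less[OF finite_separating wall(4)] by simp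
    ultimately obtain ss where "prodl ss = ?w" "ascending_word I lam ss" using less.hyps by blast
    then show ?thesis using ascending_word_extend[OF y lam I less.prems wall] by metis
  qed
qed

end

theorem proposition4p32:
  fixes X Phi Pos Simp I :: "'a::euclidean_space set"
    and p :: nat and s w :: "'a \<Rightarrow> 'a" and lam mu :: 'a
  assumes "std_root_datum X Phi Pos Simp"
    and "prime p" and "coxeter_number Pos \<le> real p"
    and "I \<subseteq> Simp"
    and "s \<in> Sp Pos p"
    and "lam \<in> alcove Pos p \<inter> X"
    and "mu \<in> alcove_cl Pos p \<inter> X"
    and "{v \<in> Wp Phi p. dot Pos v mu = mu} = {id, s}"
    and "w \<in> WIlam Phi Pos I p lam"
    and "dot Pos w lam \<in> dominant X Pos"
  shows "preceq X Pos p lam (dot Pos w lam) \<and>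
    (\<exists>ss. set ss \<subseteq> Sp Pos p \<and> w = prodl ss \<and>
       (\<forall>i < length ss. prec X Pos p (dot Pos (prodl (take i ss)) lam)
                                      (dot Pos (prodl (take (Suc i) ss)) lam)) \<and>
       (\<forall>i \<in> {1..length ss}.
          prodl (take i ss) \<circ> prodl (rev (take (i - 1) ss)) \<notin> WIp I p))"
proof -
  interpret std_affine_weyl X Phi Pos Simp p
    using assms(1) prime_gt_0_nat[OF assms(2)] by unfold_locales
  have "lam + rho Pos \<in> fund_alcove" "lam \<in> X"
    using assms(6) unfolding alcove_def fund_alcove_def by auto
  then obtain ss where ss: "prodl ss = w" "ascending_word I lam ss"
    using exists_ascending_word assms(4,9,10) by blast
  then have "(preceq X Pos p)\<^sup>*\<^sup>* (dot Pos (prodl (take 0 ss)) lam) (dot Pos (prodl (take (length ss) ss)) lam)"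
    unfolding ascending_word_def prec_def by (intro rtranclp_chain) blast
  then have "preceq X Pos p lam (dot Pos w lam)"
    using ss(1) unfolding preceq_def rtranclp_idemp by (simp add: dot_def)
  then show ?thesis using ss unfolding ascending_word_def by blast
qed

end
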